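(* For every $n\ge1$, $m_{\mathsf{faithful}}\big(\mathrm{Aff}(\mathcal{O}/\mathfrak{p}^n)\big)=q^n-q^{n-1}$.
   Context: For a finite group $G$, $m_{\mathsf{faithful}}(G)$ denotes the smallest dimension of a faithful complex representation of $G$. $F$ is a non-Archimedean local field with ring of integers $\mathcal{O}$, maximal ideal $\mathfrak{p}$, and residue field of size $q$. For a commutative ring $R$, $\mathrm{Aff}(R)=R\rtimes R^\times$, where the unit group $R^\times$ acts on the additive group $(R,+)$ by multiplication. *)

theory Defs
  imports "HOL-Algebra.QuotRing" "Jordan_Normal_Form.Matrix"
begin

text \<open>A normalized discrete valuation v on a field (value of 0 is irrelevant; 0 is treated
as having valuation +infinity everywhere below).\<close>

definition val_ring :: "('a::field \<Rightarrow> int) \<Rightarrow> 'a ring" where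
  "val_ring v = \<lparr>carrier = {x. x = 0 \<or> 0 \<le> v x}, monoid.mult = (*), one = 1, ring.zero = 0, ring.add = (+)\<rparr>"

definition val_ideal :: "('a::field \<Rightarrow> int) \<Rightarrow> nat \<Rightarrow> 'a set" where
  "val_ideal v n = {x. x = 0 \<or> int n \<le> v x}"

definition residue_card :: "('a::field \<Rightarrow> int) \<Rightarrow> nat" where
  "residue_card v = card (carrier (val_ring v Quot val_ideal v 1))"

definition nonarch_local_field :: "('a::field \<Rightarrow> int) \<Rightarrow> bool" where
  "nonarch_local_field v \<longleftrightarrow>
     (\<forall>x y. x \<noteq> 0 \<longrightarrow> y \<noteq> 0 \<longrightarrow> v (x * y) = v x + v y) \<and>
     (\<forall>x y. x \<noteq> 0 \<longrightarrow> y \<noteq> 0 \<longrightarrow> x + y \<noteq> 0 \<longrightarrow> min (v x) (v y) \<le> v (x + y)) \<and>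
     (\<forall>k. \<exists>x. x \<noteq> 0 \<and> v x = k) \<and>
     (\<forall>s :: nat \<Rightarrow> 'a.
        (\<forall>N. \<exists>M. \<forall>m\<ge>M. \<forall>k\<ge>M. s m - s k \<in> val_ideal v N) \<longrightarrow>
        (\<exists>L. \<forall>N. \<exists>M. \<forall>m\<ge>M. s m - L \<in> val_ideal v N)) \<and>
     finite (carrier (val_ring v Quot val_ideal v 1))"

definition Aff :: "('r, 'm) ring_scheme \<Rightarrow> ('r \<times> 'r) monoid" where
  "Aff R = \<lparr>carrier = carrier R \<times> Units R,
            monoid.mult = (\<lambda>(b, u) (b', u'). (b \<oplus>\<^bsub>R\<^esub> (u \<otimes>\<^bsub>R\<^esub> b'), u \<otimes>\<^bsub>R\<^esub> u')),
            monoid.one = (\<zero>\<^bsub>R\<^esub>, \<one>\<^bsub>R\<^esub>)\<rparr>"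

definition faithful_rep :: "('g, 'b) monoid_scheme \<Rightarrow> nat \<Rightarrow> ('g \<Rightarrow> complex mat) \<Rightarrow> bool" where
  "faithful_rep G d \<rho> \<longleftrightarrow>
     (\<forall>x\<in>carrier G. \<rho> x \<in> carrier_mat d d) \<and>
     (\<forall>x\<in>carrier G. \<forall>y\<in>carrier G. \<rho> (x \<otimes>\<^bsub>G\<^esub> y) = \<rho> x * \<rho> y) \<and>
     \<rho> \<one>\<^bsub>G\<^esub> = 1\<^sub>m d \<and>
     inj_on \<rho> (carrier G)"

definition m_faithful :: "('g, 'b) monoid_scheme \<Rightarrow> nat" where
  "m_faithful G = (LEAST d. \<exists>\<rho>. faithful_rep G d \<rho>)"

end

theory Submission
  imports Defs "Jordan_Normal_Form.Determinant" "HOL-Algebra.Multiplicative_Group"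
begin

text \<open>Let \<open>R = O/p\<^sup>n\<close>. The socle \<open>p\<^sup>n\<^sup>-\<^sup>1/p\<^sup>n\<close> lies in every nonzero principal ideal, so an
  additive character of \<open>R\<close> that is nontrivial on it is nontrivial on every nonzero ideal
  (call it primitive). Restricted to the translations, a faithful representation of
  \<open>Aff(R)\<close> has a common eigenvector whose character is primitive; conjugating by the units
  \<open>u\<close> yields eigenvectors with the characters \<open>b \<mapsto> \<chi>(u\<inverse>b)\<close>, which are pairwise distinct,
  so the dimension is at least \<open>|R\<^sup>\<times>| = q\<^sup>n - q\<^sup>n\<^sup>-\<^sup>1\<close>. Conversely, the representation induced
  from a primitive character has dimension \<open>|R\<^sup>\<times>|\<close> and is faithful.\<close>

section \<open>Linear algebra over the complex numbers\<close>

definition mat_lincomb :: "nat \<Rightarrow> 't set \<Rightarrow> ('t \<Rightarrow> complex) \<Rightarrow> ('t \<Rightarrow> complex mat) \<Rightarrow> complex mat" where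
  "mat_lincomb d I c F = mat d d (\<lambda>(i, j). \<Sum>t\<in>I. c t * F t $$ (i, j))"

lemma mat_lincomb_carrier [simp]: "mat_lincomb d I c F \<in> carrier_mat d d"
  and mat_lincomb_dim [simp]: "dim_row (mat_lincomb d I c F) = d" "dim_col (mat_lincomb d I c F) = d"
  by (simp_all add: mat_lincomb_def)

lemma index_mat_lincomb:
  "i < d \<Longrightarrow> j < d \<Longrightarrow> mat_lincomb d I c F $$ (i, j) = (\<Sum>t\<in>I. c t * F t $$ (i, j))"
  by (simp add: mat_lincomb_def)

lemma mat_lincomb_cong:
  "(\<And>t. t \<in> I \<Longrightarrow> F t = G t) \<Longrightarrow> mat_lincomb d I c F = mat_lincomb d I c G"
  unfolding mat_lincomb_def by (intro cong_mat refl) (auto intro!: sum.cong)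

lemma index_mult_mat_sum:
  "A \<in> carrier_mat n d \<Longrightarrow> B \<in> carrier_mat d m \<Longrightarrow> i < n \<Longrightarrow> j < m \<Longrightarrow>
    (A * B) $$ (i, j) = (\<Sum>l<d. A $$ (i, l) * B $$ (l, j))"
  by (simp add: scalar_prod_def lessThan_atLeast0)

lemma index_mult_mat_vec_sum:
  "A \<in> carrier_mat n d \<Longrightarrow> w \<in> carrier_vec d \<Longrightarrow> i < n \<Longrightarrow>
    (A *\<^sub>v w) $ i = (\<Sum>l<d. A $$ (i, l) * w $ l)"
  by (simp add: scalar_prod_def lessThan_atLeast0)

lemma mult_mat_lincomb:
  assumes A: "A \<in> carrier_mat d d" and F: "\<And>t. t \<in> I \<Longrightarrow> F t \<in> carrier_mat d d"
  shows "A * mat_lincomb d I c F = mat_lincomb d I c (\<lambda>t. A * F t)"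
proof (rule eq_matI)
  fix i j assume "i < dim_row (mat_lincomb d I c (\<lambda>t. A * F t))"
    "j < dim_col (mat_lincomb d I c (\<lambda>t. A * F t))"
  then have i: "i < d" and j: "j < d" by auto
  have "(A * mat_lincomb d I c F) $$ (i, j) = (\<Sum>l<d. A $$ (i, l) * (\<Sum>t\<in>I. c t * F t $$ (l, j)))"
    using A i j by (simp add: scalar_prod_def index_mat_lincomb lessThan_atLeast0)
  also have "\<dots> = (\<Sum>t\<in>I. c t * (\<Sum>l<d. A $$ (i, l) * F t $$ (l, j)))"
    by (simp add: sum_distrib_left sum_distrib_right sum.swap[of _ I] mult_ac)
  also have "\<dots> = (\<Sum>t\<in>I. c t * (A * F t) $$ (i, j))"
    by (rule sum.cong[OF refl]) (simp add: index_mult_mat_sum[OF A F] i j)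
  also have "\<dots> = mat_lincomb d I c (\<lambda>t. A * F t) $$ (i, j)"
    using i j by (simp add: index_mat_lincomb)
  finally show "(A * mat_lincomb d I c F) $$ (i, j) = mat_lincomb d I c (\<lambda>t. A * F t) $$ (i, j)" .
qed (use A in auto)

lemma mat_lincomb_mult:
  assumes A: "A \<in> carrier_mat d d" and F: "\<And>t. t \<in> I \<Longrightarrow> F t \<in> carrier_mat d d"
  shows "mat_lincomb d I c F * A = mat_lincomb d I c (\<lambda>t. F t * A)"
proof (rule eq_matI)
  fix i j assume "i < dim_row (mat_lincomb d I c (\<lambda>t. F t * A))"
    "j < dim_col (mat_lincomb d I c (\<lambda>t. F t * A))"
  then have i: "i < d" and j: "j < d" by auto
  have "(mat_lincomb d I c F * A) $$ (i, j) = (\<Sum>l<d. (\<Sum>t\<in>I. c t * F t $$ (i, l)) * A $$ (l, j))"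
    using A i j by (simp add: scalar_prod_def index_mat_lincomb lessThan_atLeast0)
  also have "\<dots> = (\<Sum>t\<in>I. c t * (\<Sum>l<d. F t $$ (i, l) * A $$ (l, j)))"
    by (simp add: sum_distrib_left sum_distrib_right sum.swap[of _ I] mult_ac)
  also have "\<dots> = (\<Sum>t\<in>I. c t * (F t * A) $$ (i, j))"
    by (rule sum.cong[OF refl]) (simp add: index_mult_mat_sum[OF F A] i j)
  also have "\<dots> = mat_lincomb d I c (\<lambda>t. F t * A) $$ (i, j)"
    using i j by (simp add: index_mat_lincomb)
  finally show "(mat_lincomb d I c F * A) $$ (i, j) = mat_lincomb d I c (\<lambda>t. F t * A) $$ (i, j)" .
qed (use A in auto)

lemma mat_lincomb_mult_vec:
  assumes w: "w \<in> carrier_vec d" and F: "\<And>t. t \<in> I \<Longrightarrow> F t \<in> carrier_mat d d"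
  shows "mat_lincomb d I c F *\<^sub>v w = vec d (\<lambda>i. \<Sum>t\<in>I. c t * (F t *\<^sub>v w) $ i)"
proof (rule eq_vecI)
  fix i assume "i < dim_vec (vec d (\<lambda>i. \<Sum>t\<in>I. c t * (F t *\<^sub>v w) $ i))"
  then have i: "i < d" by simp
  have "(mat_lincomb d I c F *\<^sub>v w) $ i = (\<Sum>l<d. (\<Sum>t\<in>I. c t * F t $$ (i, l)) * w $ l)"
    using w i by (simp add: scalar_prod_def index_mat_lincomb lessThan_atLeast0)
  also have "\<dots> = (\<Sum>t\<in>I. c t * (\<Sum>l<d. F t $$ (i, l) * w $ l))"
    by (simp add: sum_distrib_left sum_distrib_right sum.swap[of _ I] mult_ac)
  also have "\<dots> = (\<Sum>t\<in>I. c t * (F t *\<^sub>v w) $ i)"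
    by (rule sum.cong[OF refl]) (simp add: index_mult_mat_vec_sum[OF F w] i)
  finally show "(mat_lincomb d I c F *\<^sub>v w) $ i = vec d (\<lambda>i. \<Sum>t\<in>I. c t * (F t *\<^sub>v w) $ i) $ i"
    using i by simp
qed (use w in auto)

lemma smult_vec_right_cancel:
  fixes w :: "complex vec"
  assumes "w \<in> carrier_vec d" "w \<noteq> 0\<^sub>v d" "a \<cdot>\<^sub>v w = b \<cdot>\<^sub>v w"
  shows "a = b"
proof -
  obtain i where "i < d" "w $ i \<noteq> 0"
    using assms(1,2) by (metis carrier_vecD eq_vecI index_zero_vec(1,2))
  moreover have "(a \<cdot>\<^sub>v w) $ i = (b \<cdot>\<^sub>v w) $ i" using assms(3) by simp
  ultimately show "a = b" using assms(1) by simp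
qed

lemma mult_mat_vec_zero [simp]:
  "(A :: 'a :: semiring_0 mat) \<in> carrier_mat n d \<Longrightarrow> A *\<^sub>v 0\<^sub>v d = 0\<^sub>v n"
  by (rule eq_vecI) auto

lemma smult_mat_mult_vec:
  "(B :: complex mat) \<in> carrier_mat n d \<Longrightarrow> u \<in> carrier_vec d \<Longrightarrow> (z \<cdot>\<^sub>m B) *\<^sub>v u = z \<cdot>\<^sub>v (B *\<^sub>v u)"
  by (rule eq_vecI) (auto simp: scalar_prod_def sum_distrib_left mult_ac)

text \<open>Pad both matrices to square ones and compare determinants.\<close>
lemma right_invertible_dim_le:
  fixes P Q :: "complex mat"
  assumes P: "P \<in> carrier_mat k d" and Q: "Q \<in> carrier_mat d k" and PQ: "P * Q = 1\<^sub>m k"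
  shows "k \<le> d"
proof (rule ccontr)
  assume "\<not> k \<le> d"
  then have dk: "d < k" by simp
  define P' where "P' = mat k k (\<lambda>(i, j). if j < d then P $$ (i, j) else 0)"
  define Q' where "Q' = mat k k (\<lambda>(i, j). if i < d then Q $$ (i, j) else 0)"
  have P'c: "P' \<in> carrier_mat k k" and Q'c: "Q' \<in> carrier_mat k k" by (auto simp: P'_def Q'_def)
  have "P' * Q' = P * Q"
  proof (rule eq_matI)
    fix i j assume "i < dim_row (P * Q)" "j < dim_col (P * Q)"
    then have i: "i < k" and j: "j < k" using P Q by auto
    have "(P' * Q') $$ (i, j) = (\<Sum>l\<in>{0..<k}. (if l < d then P $$ (i, l) * Q $$ (l, j) else 0))"
      using i j by (auto simp: P'_def Q'_def scalar_prod_def intro!: sum.cong)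
    also have "\<dots> = (\<Sum>l\<in>{0..<d}. P $$ (i, l) * Q $$ (l, j))"
      using dk by (intro sum.mono_neutral_cong_right) auto
    also have "\<dots> = (P * Q) $$ (i, j)" using i j P Q by (simp add: scalar_prod_def)
    finally show "(P' * Q') $$ (i, j) = (P * Q) $$ (i, j)" .
  qed (use P Q in \<open>auto simp: P'_def Q'_def\<close>)
  then have "det P' * det Q' = 1" using PQ det_mult[OF P'c Q'c] by simp
  moreover have "det P' = 0"
  proof -
    have "P' *\<^sub>v unit_vec k d = 0\<^sub>v k"
      by (rule eq_vecI) (auto simp: P'_def scalar_prod_def unit_vec_def intro!: sum.neutral)
    moreover have "unit_vec k d \<noteq> (0\<^sub>v k :: complex vec)"
      using dk by (metis index_unit_vec(1) index_zero_vec(1) zero_neq_one)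
    ultimately show ?thesis using det_0_iff_vec_prod_zero_field[OF P'c] unit_vec_carrier by blast
  qed
  ultimately show False by simp
qed

lemma sum_root_of_unity_powers:
  assumes K: "K > 0" and j: "j < K"
  shows "(\<Sum>k<K. (cis (2 * pi / K) ^ j) ^ k) = (if j = 0 then of_nat K else 0)"
proof (cases "j = 0")
  case False
  define z where "z = cis (2 * pi / K) ^ j"
  have "z ^ K = cis (real j * (2 * pi))"
    using K by (simp add: z_def DeMoivre power_mult[symmetric] mult.commute[of j K])
  also have "\<dots> = 1" using cis_multiple_2pi[of "real j"] by (simp add: mult.commute)
  finally have zK: "z ^ K = 1" .
  have "z \<noteq> 1"
  proof
    assume "z = 1"
    then have "cos (real j * (2 * pi / K)) = 1" unfolding z_def
      by (metis DeMoivre cis.sel(1) one_complex.sel(1))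
    then obtain m :: int where "real j * (2 * pi / K) = real_of_int m * 2 * pi"
      using cos_one_2pi_int by blast
    then have "real j = real_of_int m * K" using K by (simp add: field_simps)
    then have h: "real_of_int m * real K = real j" by simp
    show False
    proof (cases "m \<le> 0")
      case True
      then have "real_of_int m * real K \<le> 0" by (simp add: mult_nonpos_nonneg)
      then show False using h False by simp
    next
      case False
      then have "real K \<le> real_of_int m * real K"
        using mult_right_mono[of 1 "real_of_int m" "real K"] by simp
      then show False using h j by simp
    qed
  qed
  then show ?thesis using geometric_sum[of z K] zK False by (simp add: z_def)
qed simp

lemma pow_mat_commute:
  assumes X: "X \<in> carrier_mat d d" and Y: "Y \<in> carrier_mat d d" and XY: "Y * X = X * Y"
  shows "Y * X ^\<^sub>m j = X ^\<^sub>m j * Y"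
proof (induction j)
  case 0
  show ?case using X Y by simp
next
  case (Suc j)
  have Xj: "X ^\<^sub>m j \<in> carrier_mat d d" using X by simp
  have "Y * X ^\<^sub>m Suc j = (Y * X ^\<^sub>m j) * X" using assoc_mult_mat[OF Y Xj X] by simp
  also have "\<dots> = X ^\<^sub>m j * (Y * X)" using Suc assoc_mult_mat[OF Xj Y X] by simp
  also have "\<dots> = X ^\<^sub>m Suc j * Y" using XY assoc_mult_mat[OF Xj X Y] by simp
  finally show ?case .
qed

text \<open>If \<open>X\<^sup>K = 1\<close> and \<open>z\<^sup>K = 1\<close>, this is \<open>K\<close> times the projection onto the eigenspace of \<open>X\<close>
  for the eigenvalue \<open>z\<inverse>\<close>.\<close>
definition eigenprojector :: "complex mat \<Rightarrow> nat \<Rightarrow> complex \<Rightarrow> complex mat" where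
  "eigenprojector X K z = mat_lincomb (dim_row X) {..<K} (\<lambda>j. z ^ j) (\<lambda>j. X ^\<^sub>m j)"

lemma eigenprojector_carrier:
  "X \<in> carrier_mat d d \<Longrightarrow> eigenprojector X K z \<in> carrier_mat d d"
  by (simp add: eigenprojector_def)

lemma eigenprojector_commute:
  assumes X: "X \<in> carrier_mat d d" and Y: "Y \<in> carrier_mat d d" and XY: "Y * X = X * Y"
  shows "Y * eigenprojector X K z = eigenprojector X K z * Y"
  using X Y pow_mat_commute[OF X Y XY]
  by (simp add: eigenprojector_def mult_mat_lincomb mat_lincomb_mult cong: mat_lincomb_cong)

lemma eigenprojector_preserves_eigenvector:
  assumes X: "X \<in> carrier_mat d d" and Y: "Y \<in> carrier_mat d d" and XY: "Y * X = X * Y"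
    and w: "w \<in> carrier_vec d" and eig: "Y *\<^sub>v w = c \<cdot>\<^sub>v w"
  shows "Y *\<^sub>v (eigenprojector X K z *\<^sub>v w) = c \<cdot>\<^sub>v (eigenprojector X K z *\<^sub>v w)"
proof -
  define P where "P = eigenprojector X K z"
  have P: "P \<in> carrier_mat d d" unfolding P_def by (rule eigenprojector_carrier[OF X])
  have "Y *\<^sub>v (P *\<^sub>v w) = P *\<^sub>v (Y *\<^sub>v w)"
    using eigenprojector_commute[OF X Y XY] assoc_mult_mat_vec[OF Y P w] assoc_mult_mat_vec[OF P Y w]
    by (simp add: P_def)
  also have "\<dots> = c \<cdot>\<^sub>v (P *\<^sub>v w)" unfolding eig by (rule mult_mat_vec[OF P w])
  finally show ?thesis unfolding P_def .
qed

lemma eigenprojector_eigen: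
  assumes X: "X \<in> carrier_mat d d" and XK: "X ^\<^sub>m K = 1\<^sub>m d" and zK: "z ^ K = 1"
  shows "z \<cdot>\<^sub>m (X * eigenprojector X K z) = eigenprojector X K z"
proof (rule eq_matI)
  fix i j assume "i < dim_row (eigenprojector X K z)" "j < dim_col (eigenprojector X K z)"
  then have i: "i < d" and j: "j < d" using X by (auto simp: eigenprojector_def)
  define f where "f l = z ^ l * (X ^\<^sub>m l) $$ (i, j)" for l
  have dX: "dim_row X = d" using X by simp
  have XP: "X * eigenprojector X K z = mat_lincomb d {..<K} (\<lambda>j. z ^ j) (\<lambda>j. X ^\<^sub>m Suc j)"
    unfolding eigenprojector_def dX using X pow_mat_commute[OF X X refl]
    by (simp add: mult_mat_lincomb cong: mat_lincomb_cong)
  have "(z \<cdot>\<^sub>m (X * eigenprojector X K z)) $$ (i, j) = (\<Sum>l<K. f (Suc l))"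
    using i j by (simp add: XP index_mat_lincomb f_def sum_distrib_left mult_ac)
  also have "\<dots> = (\<Sum>l<K. f l)"
    using sum.lessThan_Suc_shift[of f K] XK zK X by (simp add: f_def)
  also have "\<dots> = eigenprojector X K z $$ (i, j)"
    using i j X by (simp add: eigenprojector_def index_mat_lincomb f_def)
  finally show "(z \<cdot>\<^sub>m (X * eigenprojector X K z)) $$ (i, j) = eigenprojector X K z $$ (i, j)" .
qed (use X in \<open>auto simp: eigenprojector_def\<close>)

lemma sum_eigenprojectors:
  assumes X: "X \<in> carrier_mat d d" and K: "K > 0" and w: "w \<in> carrier_vec d"
  shows "vec d (\<lambda>i. \<Sum>k<K. (eigenprojector X K (cis (2 * pi / K) ^ k) *\<^sub>v w) $ i) = of_nat K \<cdot>\<^sub>v w"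
proof (rule eq_vecI)
  define \<omega> where "\<omega> = cis (2 * pi / K)"
  fix i assume "i < dim_vec (of_nat K \<cdot>\<^sub>v w)"
  then have i: "i < d" using w by simp
  have "(\<Sum>k<K. (eigenprojector X K (\<omega> ^ k) *\<^sub>v w) $ i)
      = (\<Sum>k<K. \<Sum>j<K. (\<omega> ^ k) ^ j * (X ^\<^sub>m j *\<^sub>v w) $ i)"
    using w X i by (simp add: eigenprojector_def mat_lincomb_mult_vec)
  also have "\<dots> = (\<Sum>j<K. (\<Sum>k<K. (\<omega> ^ j) ^ k) * (X ^\<^sub>m j *\<^sub>v w) $ i)"
    by (subst sum.swap) (simp add: sum_distrib_left power_mult[symmetric] mult.commute)
  also have "\<dots> = (\<Sum>j<K. if j = 0 then of_nat K * (X ^\<^sub>m j *\<^sub>v w) $ i else 0)"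
    by (rule sum.cong[OF refl]) (use sum_root_of_unity_powers[OF K] in \<open>simp add: \<omega>_def\<close>)
  also have "\<dots> = of_nat K * w $ i" using K w X by simp
  finally show "vec d (\<lambda>i. \<Sum>k<K. (eigenprojector X K (cis (2 * pi / K) ^ k) *\<^sub>v w) $ i) $ i
      = (of_nat K \<cdot>\<^sub>v w) $ i"
    using i w by (simp add: \<omega>_def)
qed (use w in auto)

lemma finite_order_eigenprojector:
  assumes X: "X \<in> carrier_mat d d" and XK: "X ^\<^sub>m K = 1\<^sub>m d" and K: "K > 0"
    and w: "w \<in> carrier_vec d" "w \<noteq> 0\<^sub>v d"
  obtains z where "eigenprojector X K z *\<^sub>v w \<noteq> 0\<^sub>v d"
    and "X *\<^sub>v (eigenprojector X K z *\<^sub>v w) = inverse z \<cdot>\<^sub>v (eigenprojector X K z *\<^sub>v w)"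
proof -
  define \<omega> where "\<omega> = cis (2 * pi / K)"
  have "\<exists>k<K. eigenprojector X K (\<omega> ^ k) *\<^sub>v w \<noteq> 0\<^sub>v d"
  proof (rule ccontr)
    assume "\<not> ?thesis"
    then have "vec d (\<lambda>i. \<Sum>k<K. (eigenprojector X K (\<omega> ^ k) *\<^sub>v w) $ i) = 0 \<cdot>\<^sub>v w"
      by (intro eq_vecI) (use w in auto)
    then have "of_nat K \<cdot>\<^sub>v w = 0 \<cdot>\<^sub>v w" using sum_eigenprojectors[OF X K w(1)] by (simp add: \<omega>_def)
    then have "of_nat K = (0 :: complex)" using smult_vec_right_cancel[OF w(1,2)] by blast
    then show False using K by simp
  qed
  then obtain k where nz: "eigenprojector X K (\<omega> ^ k) *\<^sub>v w \<noteq> 0\<^sub>v d" by blast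
  define z where "z = \<omega> ^ k"
  define P where "P = eigenprojector X K z"
  have P: "P \<in> carrier_mat d d" using X by (simp add: P_def eigenprojector_carrier)
  have "z ^ K = 1"
    using K cis_multiple_2pi[of "real k"]
    by (simp add: z_def \<omega>_def DeMoivre mult.commute flip: power_mult)
  then have eig: "z \<cdot>\<^sub>m (X * P) = P" and z0: "z \<noteq> 0"
    using eigenprojector_eigen[OF X XK] K by (auto simp: P_def power_0_left)
  have "P *\<^sub>v w = z \<cdot>\<^sub>v (X *\<^sub>v (P *\<^sub>v w))"
    using eig X P w by (metis assoc_mult_mat_vec mult_carrier_mat smult_mat_mult_vec)
  then have "X *\<^sub>v (P *\<^sub>v w) = inverse z \<cdot>\<^sub>v (P *\<^sub>v w)"
    using z0 by (metis smult_smult_assoc left_inverse one_smult_vec)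
  then show ?thesis using that nz by (simp add: P_def z_def)
qed

lemma common_eigenvector_in_kernel:
  fixes C :: "complex mat"
  assumes S: "finite S" "S \<subseteq> carrier_mat d d"
    and comm: "\<And>X Y. X \<in> S \<Longrightarrow> Y \<in> S \<Longrightarrow> X * Y = Y * X"
    and finite_order: "\<And>X. X \<in> S \<Longrightarrow> \<exists>K>0. X ^\<^sub>m K = 1\<^sub>m d"
    and C: "C \<in> carrier_mat d d" "\<And>X. X \<in> S \<Longrightarrow> C * X = X * C"
    and w0: "w0 \<in> carrier_vec d" "w0 \<noteq> 0\<^sub>v d" "C *\<^sub>v w0 = 0\<^sub>v d"
  shows "\<exists>w\<in>carrier_vec d. w \<noteq> 0\<^sub>v d \<and> C *\<^sub>v w = 0\<^sub>v d \<and> (\<forall>X\<in>S. \<exists>c. X *\<^sub>v w = c \<cdot>\<^sub>v w)"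
proof -
  have "\<exists>w\<in>carrier_vec d. w \<noteq> 0\<^sub>v d \<and> C *\<^sub>v w = 0\<^sub>v d \<and> (\<forall>X\<in>T. \<exists>c. X *\<^sub>v w = c \<cdot>\<^sub>v w)"
    if "T \<subseteq> S" for T
    using finite_subset[OF that S(1)] that
  proof (induction T rule: finite_induct)
    case empty
    then show ?case using w0 by blast
  next
    case (insert X T)
    obtain w where w: "w \<in> carrier_vec d" "w \<noteq> 0\<^sub>v d" "C *\<^sub>v w = 0\<^sub>v d"
      and eig: "\<forall>Y\<in>T. \<exists>c. Y *\<^sub>v w = c \<cdot>\<^sub>v w"
      using insert.IH insert.prems by auto
    have X: "X \<in> S" "X \<in> carrier_mat d d" using insert.prems S(2) by auto
    obtain K where K: "K > 0" "X ^\<^sub>m K = 1\<^sub>m d" using finite_order[OF X(1)] by blast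
    obtain z where nz: "eigenprojector X K z *\<^sub>v w \<noteq> 0\<^sub>v d"
      and eigX: "X *\<^sub>v (eigenprojector X K z *\<^sub>v w) = inverse z \<cdot>\<^sub>v (eigenprojector X K z *\<^sub>v w)"
      using finite_order_eigenprojector[OF X(2) K(2,1) w(1,2)] by blast
    define P where "P = eigenprojector X K z"
    have Pw: "P *\<^sub>v w \<in> carrier_vec d"
      unfolding P_def by (rule mult_mat_vec_carrier[OF eigenprojector_carrier[OF X(2)] w(1)])
    have "C *\<^sub>v w = 0 \<cdot>\<^sub>v w" using w(1,3) by auto
    then have "C *\<^sub>v (P *\<^sub>v w) = 0 \<cdot>\<^sub>v (P *\<^sub>v w)"
      unfolding P_def by (rule eigenprojector_preserves_eigenvector[OF X(2) C(1) C(2)[OF X(1)] w(1)])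
    also have "\<dots> = 0\<^sub>v d" using carrier_vecD[OF Pw] by (intro eq_vecI) auto
    finally have "C *\<^sub>v (P *\<^sub>v w) = 0\<^sub>v d" .
    moreover have "\<exists>c. Y *\<^sub>v (P *\<^sub>v w) = c \<cdot>\<^sub>v (P *\<^sub>v w)" if Y_T: "Y \<in> T" for Y
    proof -
      have Y: "Y \<in> S" "Y \<in> carrier_mat d d" using Y_T insert.prems S(2) by auto
      obtain c where "Y *\<^sub>v w = c \<cdot>\<^sub>v w" using eig Y_T by auto
      then show ?thesis
        using eigenprojector_preserves_eigenvector[OF X(2) Y(2) comm[OF Y(1) X(1)] w(1)]
        by (auto simp: P_def)
    qed
    moreover note Pw
    moreover have "P *\<^sub>v w \<noteq> 0\<^sub>v d" "\<exists>c. X *\<^sub>v (P *\<^sub>v w) = c \<cdot>\<^sub>v (P *\<^sub>v w)"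
      using nz eigX by (auto simp: P_def)
    ultimately show ?case by (intro bexI[of _ "P *\<^sub>v w"]) auto
  qed
  then show ?thesis by blast
qed

lemma biorthogonal_card_le:
  fixes r w :: "'i \<Rightarrow> complex vec"
  assumes I: "finite I" and r: "\<And>i. i \<in> I \<Longrightarrow> r i \<in> carrier_vec d"
    and w: "\<And>i. i \<in> I \<Longrightarrow> w i \<in> carrier_vec d"
    and rw: "\<And>i j. i \<in> I \<Longrightarrow> j \<in> I \<Longrightarrow> r i \<bullet> w j = (if i = j then 1 else 0)"
  shows "card I \<le> d"
proof -
  define k where "k = card I"
  obtain e where e: "bij_betw e {..<k} I"
    using ex_bij_betw_nat_finite[OF I] unfolding k_def atLeast0LessThan by blast
  have eI: "i < k \<Longrightarrow> e i \<in> I" for i using e by (auto simp: bij_betw_def)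
  define \<Phi> where "\<Phi> = mat k d (\<lambda>(i, j). r (e i) $ j)"
  define \<Psi> where "\<Psi> = mat d k (\<lambda>(i, j). w (e j) $ i)"
  have "\<Phi> * \<Psi> = 1\<^sub>m k"
  proof (rule eq_matI)
    fix i j assume "i < dim_row (1\<^sub>m k)" "j < dim_col (1\<^sub>m k)"
    then have ij: "i < k" "j < k" by auto
    have "(\<Phi> * \<Psi>) $$ (i, j) = r (e i) \<bullet> w (e j)"
      using ij w[OF eI[OF ij(2)]] by (simp add: \<Phi>_def \<Psi>_def scalar_prod_def)
    also have "\<dots> = 1\<^sub>m k $$ (i, j)"
      using rw[OF eI eI] ij e unfolding bij_betw_def inj_on_def by auto
    finally show "(\<Phi> * \<Psi>) $$ (i, j) = 1\<^sub>m k $$ (i, j)" .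
  qed (auto simp: \<Phi>_def \<Psi>_def)
  then show ?thesis
    using right_invertible_dim_le[of \<Phi> k d \<Psi>] by (simp add: \<Phi>_def \<Psi>_def k_def)
qed

lemma sum_if_bij_eq:
  assumes g: "bij_betw g {..<(K::nat)} S" and c: "c \<in> S"
  shows "(\<Sum>l<K. if g l = c then f l else 0) = f (inv_into {..<K} g c)"
proof -
  define l0 where "l0 = inv_into {..<K} g c"
  have l0: "l0 < K" "g l0 = c" using g c unfolding l0_def
    by (auto simp: bij_betw_def inv_into_into f_inv_into_f)
  have "(\<Sum>l<K. if g l = c then f l else 0) = (\<Sum>l<K. if l = l0 then f l else 0)"
    using l0 g by (intro sum.cong refl) (auto simp: bij_betw_def inj_on_def)
  also have "\<dots> = f l0" using l0 by simp
  finally show ?thesis unfolding l0_def .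
qed

section \<open>Characters and representations of finite abelian groups\<close>

definition add_character :: "('a, 'b) ring_scheme \<Rightarrow> ('a \<Rightarrow> complex) \<Rightarrow> bool" where
  "add_character G \<chi> \<longleftrightarrow>
     (\<forall>x\<in>carrier G. \<forall>y\<in>carrier G. \<chi> (x \<oplus>\<^bsub>G\<^esub> y) = \<chi> x * \<chi> y) \<and> \<chi> \<zero>\<^bsub>G\<^esub> = 1"

context abelian_group
begin

lemma add_character_add:
  "add_character G \<chi> \<Longrightarrow> x \<in> carrier G \<Longrightarrow> y \<in> carrier G \<Longrightarrow> \<chi> (x \<oplus> y) = \<chi> x * \<chi> y"
  and add_character_zero: "add_character G \<chi> \<Longrightarrow> \<chi> \<zero> = 1"
  by (simp_all add: add_character_def)

lemma add_character_neg:
  "add_character G \<chi> \<Longrightarrow> x \<in> carrier G \<Longrightarrow> \<chi> (\<ominus> x) * \<chi> x = 1"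
  by (metis a_inv_closed add_character_add add_character_zero l_neg)

lemma add_character_nonzero: "add_character G \<chi> \<Longrightarrow> x \<in> carrier G \<Longrightarrow> \<chi> x \<noteq> 0"
  using add_character_neg by fastforce

lemma sum_translate_subgroup:
  assumes H: "additive_subgroup H G" and h: "h \<in> H"
  shows "(\<Sum>x\<in>H. f (h \<oplus> x)) = (\<Sum>x\<in>H. f x)"
proof -
  interpret H: additive_subgroup H G by (rule H)
  have HG: "H \<subseteq> carrier G" by (rule H.a_subset)
  have "bij_betw (\<lambda>x. h \<oplus> x) H H"
  proof (rule bij_betw_imageI)
    show "inj_on (\<lambda>x. h \<oplus> x) H"
      using add.inj_on_cmult[of h] h HG by (auto intro: inj_on_subset)
    have "y = h \<oplus> (\<ominus> h \<oplus> y)" if "y \<in> H" for y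
      using that h HG by (auto simp: a_assoc[symmetric] r_neg)
    then show "(\<lambda>x. h \<oplus> x) ` H = H" using h by (auto intro!: image_eqI)
  qed
  then show ?thesis by (rule sum.reindex_bij_betw)
qed

lemma additive_subgroup_carrier: "additive_subgroup (carrier G) G"
  by (simp add: additive_subgroup_def add.subgroup_self)

lemma add_character_sum_eq_0:
  assumes \<chi>: "add_character G \<chi>" and H: "additive_subgroup H G" "finite H"
    and h: "h \<in> H" "\<chi> h \<noteq> 1"
  shows "(\<Sum>x\<in>H. \<chi> x) = 0"
proof -
  have HG: "H \<subseteq> carrier G" using H(1) by (rule additive_subgroup.a_subset)
  have "(\<Sum>x\<in>H. \<chi> x) = (\<Sum>x\<in>H. \<chi> (h \<oplus> x))" by (rule sum_translate_subgroup[OF H(1) h(1), symmetric])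
  also have "\<dots> = \<chi> h * (\<Sum>x\<in>H. \<chi> x)"
    using HG h by (simp add: sum_distrib_left add_character_add[OF \<chi>] subsetD)
  finally show ?thesis using h(2) by (metis mult_cancel_right1)
qed

lemma add_character_orthogonal:
  assumes fin: "finite (carrier G)" and \<chi>: "add_character G \<chi>" and \<psi>: "add_character G \<psi>"
  shows "(\<Sum>x\<in>carrier G. \<chi> (\<ominus> x) * \<psi> x)
           = (if \<forall>x\<in>carrier G. \<chi> x = \<psi> x then of_nat (card (carrier G)) else 0)"
proof (cases "\<forall>x\<in>carrier G. \<chi> x = \<psi> x")
  case True
  then show ?thesis using add_character_neg[OF \<chi>] by simp
next
  case False
  then obtain x0 where x0: "x0 \<in> carrier G" "\<chi> x0 \<noteq> \<psi> x0" by blast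
  define \<phi> where "\<phi> x = \<chi> (\<ominus> x) * \<psi> x" for x
  have "add_character G \<phi>"
    unfolding add_character_def
  proof (intro conjI ballI)
    fix x y assume "x \<in> carrier G" "y \<in> carrier G"
    then show "\<phi> (x \<oplus> y) = \<phi> x * \<phi> y"
      using add_character_add[OF \<chi>] add_character_add[OF \<psi>] by (simp add: \<phi>_def minus_add)
  next
    have "\<ominus> \<zero> = \<zero>" using l_neg[OF zero_closed] by (metis a_inv_closed r_zero zero_closed)
    then show "\<phi> \<zero> = 1"
      using add_character_zero[OF \<chi>] add_character_zero[OF \<psi>] by (simp only: \<phi>_def mult_1)
  qed
  moreover have "\<phi> x0 \<noteq> 1"
  proof
    assume "\<phi> x0 = 1"
    then have "\<chi> (\<ominus> x0) * \<psi> x0 = \<chi> (\<ominus> x0) * \<chi> x0"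
      using add_character_neg[OF \<chi> x0(1)] by (simp add: \<phi>_def)
    moreover have "\<chi> (\<ominus> x0) \<noteq> 0" using add_character_nonzero[OF \<chi>] x0(1) by simp
    ultimately show False using x0(2) by simp
  qed
  ultimately have "(\<Sum>x\<in>carrier G. \<phi> x) = 0"
    using add_character_sum_eq_0 additive_subgroup_carrier fin x0(1) by blast
  then show ?thesis using False by (auto simp: \<phi>_def)
qed

end

locale finite_add_rep = abelian_group G for G (structure) +
  fixes A :: "'a \<Rightarrow> complex mat" and d :: nat
  assumes finite_carrier: "finite (carrier G)"
    and A_carrier: "x \<in> carrier G \<Longrightarrow> A x \<in> carrier_mat d d"
    and A_add: "x \<in> carrier G \<Longrightarrow> y \<in> carrier G \<Longrightarrow> A (x \<oplus> y) = A x * A y"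
    and A_zero: "A \<zero> = 1\<^sub>m d"
begin

lemma A_commute: "x \<in> carrier G \<Longrightarrow> y \<in> carrier G \<Longrightarrow> A x * A y = A y * A x"
  using A_add a_comm by metis

lemma A_add_pow: "x \<in> carrier G \<Longrightarrow> A ([j] \<cdot> x) = A x ^\<^sub>m j"
  by (induction j) (simp_all add: A_zero A_add add.nat_pow_Suc carrier_matD[OF A_carrier])

lemma A_finite_order:
  assumes "x \<in> carrier G" shows "\<exists>K>0. A x ^\<^sub>m K = 1\<^sub>m d"
proof (intro exI conjI)
  show "add.ord x > 0" using add.ord_ge_1[OF finite_carrier assms] by simp
  show "A x ^\<^sub>m add.ord x = 1\<^sub>m d"
    using A_add_pow[OF assms, of "add.ord x"] add.pow_ord_eq_1[OF assms] A_zero by simp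
qed

lemma eigenvalue_add_character:
  assumes w: "w \<in> carrier_vec d" "w \<noteq> 0\<^sub>v d" and eig: "\<And>x. x \<in> carrier G \<Longrightarrow> A x *\<^sub>v w = \<chi> x \<cdot>\<^sub>v w"
  shows "add_character G \<chi>"
  unfolding add_character_def
proof (intro conjI ballI)
  fix x y assume x: "x \<in> carrier G" and y: "y \<in> carrier G"
  have "\<chi> (x \<oplus> y) \<cdot>\<^sub>v w = A x *\<^sub>v (A y *\<^sub>v w)"
    using eig[of "x \<oplus> y"] x y A_add[OF x y] A_carrier[OF x] A_carrier[OF y] w(1) by simp
  also have "\<dots> = \<chi> y \<cdot>\<^sub>v (A x *\<^sub>v w)" using eig[OF y] mult_mat_vec[OF A_carrier[OF x] w(1)] by simp
  also have "\<dots> = (\<chi> x * \<chi> y) \<cdot>\<^sub>v w" using eig[OF x] by (simp add: smult_smult_assoc mult.commute)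
  finally show "\<chi> (x \<oplus> y) = \<chi> x * \<chi> y" using smult_vec_right_cancel[OF w] by blast
next
  have "\<chi> \<zero> \<cdot>\<^sub>v w = 1 \<cdot>\<^sub>v w" using eig[of \<zero>] w by (simp add: A_zero)
  then show "\<chi> \<zero> = 1" using smult_vec_right_cancel[OF w] by blast
qed

text \<open>By orthogonality of characters, row \<open>k\<close> of \<open>\<Sum>\<^sub>x \<chi>\<^sub>i(-x) A x\<close> is a dual vector that
  vanishes on every \<open>w j\<close> with \<open>j \<noteq> i\<close>.\<close>
lemma eigenvectors_card_le:
  assumes I: "finite I" and w: "\<And>i. i \<in> I \<Longrightarrow> w i \<in> carrier_vec d" "\<And>i. i \<in> I \<Longrightarrow> w i \<noteq> 0\<^sub>v d"
    and eig: "\<And>i x. i \<in> I \<Longrightarrow> x \<in> carrier G \<Longrightarrow> A x *\<^sub>v w i = \<chi> i x \<cdot>\<^sub>v w i"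
    and distinct: "\<And>i j. i \<in> I \<Longrightarrow> j \<in> I \<Longrightarrow> i \<noteq> j \<Longrightarrow> \<exists>x\<in>carrier G. \<chi> i x \<noteq> \<chi> j x"
  shows "card I \<le> d"
proof -
  have \<chi>: "add_character G (\<chi> i)" if "i \<in> I" for i
    by (rule eigenvalue_add_character[OF w(1)[OF that] w(2)[OF that] eig[OF that]])
  define N :: complex where "N = of_nat (card (carrier G))"
  have "card (carrier G) > 0" using finite_carrier zero_closed card_gt_0_iff by blast
  then have N: "N \<noteq> 0" by (simp add: N_def)
  define idx where "idx i = (SOME k. k < d \<and> w i $ k \<noteq> 0)" for i
  have idx: "idx i < d \<and> w i $ idx i \<noteq> 0" if "i \<in> I" for i
  proof -
    have "\<exists>k. k < d \<and> w i $ k \<noteq> 0"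
      using w[OF that] by (metis carrier_vecD eq_vecI index_zero_vec(1,2))
    then show ?thesis unfolding idx_def by (rule someI_ex)
  qed
  define C where "C i = mat_lincomb d (carrier G) (\<lambda>x. \<chi> i (\<ominus> x)) A" for i
  define r where "r i = (1 / (N * w i $ idx i)) \<cdot>\<^sub>v row (C i) (idx i)" for i
  have row_C: "row (C i) k \<in> carrier_vec d" for i k by (intro carrier_vecI) (simp add: C_def)
  have r_carrier: "r i \<in> carrier_vec d" for i using row_C by (simp add: r_def)
  have "r i \<bullet> w j = (if i = j then 1 else 0)" if i: "i \<in> I" and j: "j \<in> I" for i j
  proof -
    have "C i *\<^sub>v w j = vec d (\<lambda>l. \<Sum>x\<in>carrier G. \<chi> i (\<ominus> x) * (A x *\<^sub>v w j) $ l)"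
      unfolding C_def by (rule mat_lincomb_mult_vec[OF w(1)[OF j] A_carrier])
    also have "\<dots> = (\<Sum>x\<in>carrier G. \<chi> i (\<ominus> x) * \<chi> j x) \<cdot>\<^sub>v w j"
      using w(1)[OF j] by (intro eq_vecI) (auto simp: eig[OF j] sum_distrib_right mult.assoc)
    also have "\<dots> = (if i = j then N else 0) \<cdot>\<^sub>v w j"
      using add_character_orthogonal[OF finite_carrier \<chi>[OF i] \<chi>[OF j]] distinct[OF i j]
      by (auto simp: N_def)
    finally have "row (C i) (idx i) \<bullet> w j = (if i = j then N * w j $ idx i else 0)"
      using idx[OF i] w(1)[OF j] index_mult_mat_vec[of "idx i" "C i" "w j"]
      by (cases "i = j") (simp_all add: C_def)
    moreover have "r i \<bullet> w j = (row (C i) (idx i) \<bullet> w j) / (N * w i $ idx i)"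
      unfolding r_def using smult_scalar_prod_distrib[OF row_C w(1)[OF j]] by simp
    ultimately show ?thesis using idx[OF i] N by (cases "i = j") auto
  qed
  then show ?thesis by (intro biorthogonal_card_le[of I r d w] I r_carrier w(1))
qed

definition subgroup_sum :: "'a set \<Rightarrow> complex mat" where
  "subgroup_sum H = mat_lincomb d H (\<lambda>_. 1) A"

lemma subgroup_sum_commute:
  assumes H: "additive_subgroup H G" and y: "y \<in> carrier G"
  shows "subgroup_sum H * A y = A y * subgroup_sum H"
proof -
  have HG: "\<And>t. t \<in> H \<Longrightarrow> t \<in> carrier G" using additive_subgroup.a_subset[OF H] by blast
  have "subgroup_sum H * A y = mat_lincomb d H (\<lambda>_. 1) (\<lambda>t. A y * A t)"
    unfolding subgroup_sum_def using HG A_carrier[OF y] A_commute[OF _ y]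
    by (simp add: A_carrier mat_lincomb_mult cong: mat_lincomb_cong)
  also have "\<dots> = A y * subgroup_sum H"
    unfolding subgroup_sum_def using HG A_carrier[OF y] by (simp add: A_carrier mult_mat_lincomb)
  finally show ?thesis .
qed

lemma A_mult_subgroup_sum:
  assumes H: "additive_subgroup H G" and h: "h \<in> H"
  shows "A h * subgroup_sum H = subgroup_sum H"
proof -
  have HG: "\<And>t. t \<in> H \<Longrightarrow> t \<in> carrier G" using additive_subgroup.a_subset[OF H] by blast
  have "A h * subgroup_sum H = mat_lincomb d H (\<lambda>_. 1) (\<lambda>t. A (h \<oplus> t))"
    unfolding subgroup_sum_def using HG h
    by (simp add: A_carrier A_add mult_mat_lincomb cong: mat_lincomb_cong)
  also have "\<dots> = subgroup_sum H"
    unfolding subgroup_sum_def mat_lincomb_def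
    using sum_translate_subgroup[OF H h, of "\<lambda>t. 1 * A t $$ _"] by (intro cong_mat) simp_all
  finally show ?thesis .
qed

lemma subgroup_sum_idem:
  assumes H: "additive_subgroup H G"
  shows "subgroup_sum H * subgroup_sum H = of_nat (card H) \<cdot>\<^sub>m subgroup_sum H"
proof -
  have HG: "\<And>t. t \<in> H \<Longrightarrow> t \<in> carrier G" using additive_subgroup.a_subset[OF H] by blast
  have "subgroup_sum H * subgroup_sum H = mat_lincomb d H (\<lambda>_. 1) (\<lambda>t. subgroup_sum H)"
    unfolding subgroup_sum_def[of H, symmetric] using HG A_mult_subgroup_sum[OF H]
    by (simp add: subgroup_sum_def A_carrier mat_lincomb_mult cong: mat_lincomb_cong)
  also have "\<dots> = of_nat (card H) \<cdot>\<^sub>m subgroup_sum H"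
    by (intro eq_matI) (auto simp: index_mat_lincomb subgroup_sum_def)
  finally show ?thesis .
qed

lemma subgroup_sum_neq_scalar:
  assumes H: "additive_subgroup H G" and h0: "h0 \<in> H" "A h0 \<noteq> 1\<^sub>m d"
  shows "subgroup_sum H \<noteq> of_nat (card H) \<cdot>\<^sub>m 1\<^sub>m d"
proof
  define c :: complex where "c = of_nat (card H)"
  assume "subgroup_sum H = of_nat (card H) \<cdot>\<^sub>m 1\<^sub>m d"
  moreover have A0: "A h0 \<in> carrier_mat d d" using h0(1) additive_subgroup.a_subset[OF H] A_carrier by blast
  ultimately have e: "c \<cdot>\<^sub>m A h0 = c \<cdot>\<^sub>m 1\<^sub>m d"
    using A_mult_subgroup_sum[OF H h0(1)] mult_smult_distrib[OF A0 one_carrier_mat] by (simp add: c_def)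
  have "c \<noteq> 0"
    using h0(1) finite_subset[OF additive_subgroup.a_subset[OF H] finite_carrier] by (auto simp: c_def)
  moreover have "c * A h0 $$ (i, j) = c * 1\<^sub>m d $$ (i, j)" if "i < d" "j < d" for i j
    using arg_cong[OF e, of "\<lambda>X. X $$ (i, j)"] that A0 by simp
  ultimately have "A h0 = 1\<^sub>m d" using A0 by (intro eq_matI) auto
  then show False using h0(2) by simp
qed

text \<open>Since \<open>S = subgroup_sum H\<close> satisfies \<open>S\<^sup>2 = |H| S\<close>, the columns of \<open>|H| - S\<close> lie in
  the kernel of \<open>S\<close>.\<close>
lemma subgroup_sum_kernel_nonzero:
  assumes H: "additive_subgroup H G" and h0: "h0 \<in> H" "A h0 \<noteq> 1\<^sub>m d"
  obtains w0 where "w0 \<in> carrier_vec d" "w0 \<noteq> 0\<^sub>v d" "subgroup_sum H *\<^sub>v w0 = 0\<^sub>v d"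
proof -
  define S where "S = subgroup_sum H"
  define c :: complex where "c = of_nat (card H)"
  define M where "M = c \<cdot>\<^sub>m 1\<^sub>m d - S"
  have S: "S \<in> carrier_mat d d" by (simp add: S_def subgroup_sum_def)
  have M: "M \<in> carrier_mat d d" unfolding M_def by (rule minus_carrier_mat[OF S])
  have "M \<noteq> 0\<^sub>m d d"
  proof
    assume "M = 0\<^sub>m d d"
    then have "M $$ (i, j) = 0" if "i < d" "j < d" for i j using that by simp
    then have "S $$ (i, j) = (c \<cdot>\<^sub>m 1\<^sub>m d) $$ (i, j)" if "i < d" "j < d" for i j
      using that S by (force simp: M_def)
    then have "S = c \<cdot>\<^sub>m 1\<^sub>m d" using S by (intro eq_matI) auto
    then show False using subgroup_sum_neq_scalar[OF H h0] by (simp add: S_def c_def)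
  qed
  then obtain i j where ij: "i < d" "j < d" "M $$ (i, j) \<noteq> 0"
    using M by (metis carrier_matD eq_matI index_zero_mat)
  define w0 where "w0 = M *\<^sub>v unit_vec d j"
  have "w0 $ i \<noteq> 0" using ij M by (simp add: w0_def)
  then have "w0 \<noteq> 0\<^sub>v d" using ij by auto
  have "S * M = S * (c \<cdot>\<^sub>m 1\<^sub>m d) - S * S"
    unfolding M_def by (rule mult_minus_distrib_mat[OF S _ S]) simp
  also have "\<dots> = 0\<^sub>m d d"
    using subgroup_sum_idem[OF H] mult_smult_distrib[OF S one_carrier_mat] S
    by (simp add: S_def c_def)
  finally have "S *\<^sub>v w0 = 0\<^sub>v d"
    using S M by (simp add: w0_def assoc_mult_mat_vec[symmetric]) (rule eq_vecI; simp)
  moreover have "w0 \<in> carrier_vec d" using M by (simp add: w0_def)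
  ultimately show ?thesis using that \<open>w0 \<noteq> 0\<^sub>v d\<close> by (simp add: S_def)
qed

lemma common_eigenvector_character:
  assumes H: "additive_subgroup H G" and h0: "h0 \<in> H" "A h0 \<noteq> 1\<^sub>m d"
  obtains w \<chi> where "w \<in> carrier_vec d" "w \<noteq> 0\<^sub>v d" "add_character G \<chi>"
    "\<And>x. x \<in> carrier G \<Longrightarrow> A x *\<^sub>v w = \<chi> x \<cdot>\<^sub>v w" "(\<Sum>h\<in>H. \<chi> h) = 0"
proof -
  define S where "S = subgroup_sum H"
  have HG: "H \<subseteq> carrier G" by (rule additive_subgroup.a_subset[OF H])
  have S: "S \<in> carrier_mat d d" by (simp add: S_def subgroup_sum_def)
  obtain w0 where w0: "w0 \<in> carrier_vec d" "w0 \<noteq> 0\<^sub>v d" "S *\<^sub>v w0 = 0\<^sub>v d"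
    using subgroup_sum_kernel_nonzero[OF H h0] unfolding S_def by blast
  have "\<exists>w\<in>carrier_vec d. w \<noteq> 0\<^sub>v d \<and> S *\<^sub>v w = 0\<^sub>v d \<and> (\<forall>X\<in>A ` carrier G. \<exists>c. X *\<^sub>v w = c \<cdot>\<^sub>v w)"
    by (rule common_eigenvector_in_kernel[OF _ _ _ _ S _ w0])
      (auto simp: finite_carrier A_carrier A_commute A_finite_order S_def subgroup_sum_commute[OF H])
  then obtain w where w: "w \<in> carrier_vec d" "w \<noteq> 0\<^sub>v d" "S *\<^sub>v w = 0\<^sub>v d"
    and eig: "\<forall>X\<in>A ` carrier G. \<exists>c. X *\<^sub>v w = c \<cdot>\<^sub>v w" by blast
  define \<chi> where "\<chi> x = (SOME c. A x *\<^sub>v w = c \<cdot>\<^sub>v w)" for x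
  have \<chi>: "A x *\<^sub>v w = \<chi> x \<cdot>\<^sub>v w" if "x \<in> carrier G" for x
    unfolding \<chi>_def using eig that by (auto intro: someI_ex)
  have "S *\<^sub>v w = (\<Sum>h\<in>H. \<chi> h) \<cdot>\<^sub>v w"
    unfolding S_def subgroup_sum_def using w(1) HG A_carrier
    by (subst mat_lincomb_mult_vec) (auto simp: \<chi> sum_distrib_right subsetD intro!: eq_vecI sum.cong)
  moreover have "0 \<cdot>\<^sub>v w = 0\<^sub>v d" using w(1) by (intro eq_vecI) auto
  ultimately have "(\<Sum>h\<in>H. \<chi> h) \<cdot>\<^sub>v w = 0 \<cdot>\<^sub>v w" using w(3) by simp
  then have "(\<Sum>h\<in>H. \<chi> h) = 0" using smult_vec_right_cancel[OF w(1,2)] by blast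
  then show ?thesis using that w(1,2) \<chi> eigenvalue_add_character[OF w(1,2) \<chi>] by blast
qed

end

context abelian_group
begin

text \<open>The regular representation: \<open>x\<close> acts by the permutation matrix of translation by \<open>x\<close>.\<close>
lemma exists_faithful_finite_add_rep:
  assumes fin: "finite (carrier G)"
  obtains T K where "finite_add_rep G T K" "\<And>x. x \<in> carrier G \<Longrightarrow> T x = 1\<^sub>m K \<Longrightarrow> x = \<zero>"
proof -
  define K where "K = card (carrier G)"
  obtain g where g: "bij_betw g {..<K} (carrier G)"
    using ex_bij_betw_nat_finite[OF fin] unfolding K_def atLeast0LessThan by blast
  have gc: "i < K \<Longrightarrow> g i \<in> carrier G" for i using g by (auto simp: bij_betw_def)
  have ginj: "i < K \<Longrightarrow> j < K \<Longrightarrow> g i = g j \<longleftrightarrow> i = j" for i j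
    using g unfolding bij_betw_def inj_on_def by auto
  define T where "T x = mat K K (\<lambda>(i, j). if g i = x \<oplus> g j then 1 else (0::complex))" for x
  have "finite_add_rep G T K"
  proof (unfold_locales)
    show "finite (carrier G)" by (rule fin)
    show "T x \<in> carrier_mat K K" for x by (simp add: T_def)
    show "T \<zero> = 1\<^sub>m K" unfolding T_def by (intro eq_matI) (auto simp: gc ginj)
    fix x y assume x: "x \<in> carrier G" and y: "y \<in> carrier G"
    show "T (x \<oplus> y) = T x * T y"
    proof (rule eq_matI)
      fix i j assume "i < dim_row (T x * T y)" "j < dim_col (T x * T y)"
      then have ij: "i < K" "j < K" by (auto simp: T_def)
      define c where "c = y \<oplus> g j"
      have c: "c \<in> carrier G" using y gc ij unfolding c_def by simp
      have "(T x * T y) $$ (i, j) = (\<Sum>l<K. T x $$ (i, l) * T y $$ (l, j))"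
        using ij by (intro index_mult_mat_sum) (auto simp: T_def)
      also have "\<dots> = (\<Sum>l<K. if g l = c then (if g i = x \<oplus> g l then 1 else 0) else 0)"
        using ij by (intro sum.cong refl) (auto simp: T_def c_def)
      also have "\<dots> = (if g i = x \<oplus> g (inv_into {..<K} g c) then 1 else 0)"
        by (rule sum_if_bij_eq[OF g c])
      also have "\<dots> = T (x \<oplus> y) $$ (i, j)"
        using ij x y gc g c by (simp add: T_def c_def a_assoc bij_betw_def f_inv_into_f)
      finally show "T (x \<oplus> y) $$ (i, j) = (T x * T y) $$ (i, j)" by simp
    qed (auto simp: T_def)
  qed
  moreover have "x = \<zero>" if x: "x \<in> carrier G" and "T x = 1\<^sub>m K" for x
  proof -
    have K0: "0 < K" unfolding K_def using fin by (auto simp: card_gt_0_iff)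
    have "T x $$ (0, 0) = 1" using \<open>T x = 1\<^sub>m K\<close> K0 by simp
    then have "x \<oplus> g 0 = \<zero> \<oplus> g 0" using K0 gc by (simp add: T_def split: if_splits)
    then show "x = \<zero>" using x gc[OF K0] by (metis add.right_cancel zero_closed)
  qed
  ultimately show ?thesis using that by blast
qed

lemma exists_add_character_sum_eq_0:
  assumes fin: "finite (carrier G)" and H: "additive_subgroup H G" and h0: "h0 \<in> H" "h0 \<noteq> \<zero>"
  obtains \<chi> where "add_character G \<chi>" "(\<Sum>h\<in>H. \<chi> h) = 0"
proof -
  obtain T K where T: "finite_add_rep G T K" and faithful: "\<And>x. x \<in> carrier G \<Longrightarrow> T x = 1\<^sub>m K \<Longrightarrow> x = \<zero>"
    using exists_faithful_finite_add_rep[OF fin] by blast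
  have "T h0 \<noteq> 1\<^sub>m K" using faithful h0 additive_subgroup.a_subset[OF H] by blast
  then show ?thesis using finite_add_rep.common_eigenvector_character[OF T H h0(1)] that by blast
qed

end

section \<open>Faithful representations of affine groups of finite local rings\<close>

lemma (in comm_monoid) inv_mult_Units_cancel:
  assumes u: "u \<in> Units G" and c: "c \<in> Units G"
  shows "inv (u \<otimes> c) \<otimes> u = inv c"
proof -
  have uc: "u \<otimes> c \<in> Units G" using u c by simp
  have "c \<otimes> (inv (u \<otimes> c) \<otimes> u) = inv (u \<otimes> c) \<otimes> (c \<otimes> u)"
    using u c uc by (intro m_lcomm) auto
  also have "\<dots> = inv (u \<otimes> c) \<otimes> (u \<otimes> c)"
    by (simp only: m_comm[OF Units_closed[OF c] Units_closed[OF u]])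
  also have "\<dots> = \<one>" by (rule Units_l_inv[OF uc])
  finally show ?thesis
    by (rule comm_inv_char[rotated 2, symmetric]) (use u c uc in auto)
qed

lemma Aff_carrier: "carrier (Aff R) = carrier R \<times> Units R"
  and Aff_mult: "(b, u) \<otimes>\<^bsub>Aff R\<^esub> (b', u') = (b \<oplus>\<^bsub>R\<^esub> u \<otimes>\<^bsub>R\<^esub> b', u \<otimes>\<^bsub>R\<^esub> u')"
  and Aff_one: "\<one>\<^bsub>Aff R\<^esub> = (\<zero>\<^bsub>R\<^esub>, \<one>\<^bsub>R\<^esub>)"
  by (simp_all add: Aff_def)

lemma faithful_repD:
  assumes "faithful_rep G d \<rho>"
  shows faithful_rep_carrier: "x \<in> carrier G \<Longrightarrow> \<rho> x \<in> carrier_mat d d"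
    and faithful_rep_mult: "x \<in> carrier G \<Longrightarrow> y \<in> carrier G \<Longrightarrow> \<rho> (x \<otimes>\<^bsub>G\<^esub> y) = \<rho> x * \<rho> y"
    and faithful_rep_one: "\<rho> \<one>\<^bsub>G\<^esub> = 1\<^sub>m d"
    and faithful_rep_inj: "inj_on \<rho> (carrier G)"
  using assms by (simp_all add: faithful_rep_def)

text \<open>\<open>M\<close> plays the role of the socle \<open>p\<^sup>n\<^sup>-\<^sup>1/p\<^sup>n\<close> of \<open>O/p\<^sup>n\<close>: a nonzero additive
  subgroup contained in every nonzero principal ideal.\<close>
locale finite_local_ring_with_socle = cring R for R (structure) +
  fixes M :: "'a set"
  assumes finite_carrier: "finite (carrier R)"
    and nonunit_minus_one: "r \<in> carrier R \<Longrightarrow> r \<notin> Units R \<Longrightarrow> r \<ominus> \<one> \<in> Units R"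
    and M_subgroup: "additive_subgroup M R"
    and M_nontrivial: "\<exists>m\<in>M. m \<noteq> \<zero>"
    and M_principal: "a \<in> carrier R \<Longrightarrow> a \<noteq> \<zero> \<Longrightarrow> m \<in> M \<Longrightarrow> \<exists>b\<in>carrier R. m = a \<otimes> b"
begin

definition primitive_character :: "('a \<Rightarrow> complex) \<Rightarrow> bool" where
  "primitive_character \<chi> \<longleftrightarrow> add_character R \<chi> \<and> (\<Sum>m\<in>M. \<chi> m) = 0"

lemma M_subset: "M \<subseteq> carrier R"
  by (rule additive_subgroup.a_subset[OF M_subgroup])

lemma primitive_character_exists: "\<exists>\<chi>. primitive_character \<chi>"
proof -
  obtain m where "m \<in> M" "m \<noteq> \<zero>" using M_nontrivial by blast
  then show ?thesis unfolding primitive_character_def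
    using exists_add_character_sum_eq_0[OF finite_carrier M_subgroup] by blast
qed

lemma primitive_character_ideal_trivial:
  assumes \<chi>: "primitive_character \<chi>" and a: "a \<in> carrier R"
    and triv: "\<And>b. b \<in> carrier R \<Longrightarrow> \<chi> (a \<otimes> b) = 1"
  shows "a = \<zero>"
proof (rule ccontr)
  assume "a \<noteq> \<zero>"
  have "\<chi> m = 1" if m: "m \<in> M" for m
  proof -
    obtain b where "b \<in> carrier R" "m = a \<otimes> b" using M_principal[OF a \<open>a \<noteq> \<zero>\<close> m] by blast
    then show ?thesis using triv by simp
  qed
  then have "(\<Sum>m\<in>M. \<chi> m) = of_nat (card M)" by simp
  moreover have "card M > 0"
    using M_nontrivial finite_subset[OF M_subset finite_carrier] card_gt_0_iff by blast
  ultimately show False using \<chi> unfolding primitive_character_def by simp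
qed

text \<open>In a local ring every nonunit \<open>b\<close> is \<open>\<one> \<oplus> (b \<ominus> \<one>)\<close>, a sum of two units, so
  triviality on the units forces triviality on the whole principal ideal.\<close>
lemma primitive_character_units_trivial:
  assumes \<chi>: "primitive_character \<chi>" and a: "a \<in> carrier R"
    and triv: "\<And>s. s \<in> Units R \<Longrightarrow> \<chi> (a \<otimes> s) = 1"
  shows "a = \<zero>"
proof (rule primitive_character_ideal_trivial[OF \<chi> a])
  fix b assume b: "b \<in> carrier R"
  show "\<chi> (a \<otimes> b) = 1"
  proof (cases "b \<in> Units R")
    case False
    then have u: "b \<ominus> \<one> \<in> Units R" using nonunit_minus_one b by blast
    have "a \<otimes> b = a \<otimes> \<one> \<oplus> a \<otimes> (b \<ominus> \<one>)" using a b by algebra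
    then have "\<chi> (a \<otimes> b) = \<chi> (a \<otimes> \<one>) * \<chi> (a \<otimes> (b \<ominus> \<one>))"
      using \<chi> a b add_character_add by (simp add: primitive_character_def)
    then show ?thesis using triv u by simp
  qed (use triv in blast)
qed

lemma primitive_character_scalings_distinct:
  assumes \<chi>: "primitive_character \<chi>" and u: "u \<in> Units R" and t: "t \<in> Units R"
    and eq: "\<And>b. b \<in> carrier R \<Longrightarrow> \<chi> (inv u \<otimes> b) = \<chi> (inv t \<otimes> b)"
  shows "u = t"
proof -
  have \<chi>': "add_character R \<chi>" using \<chi> by (simp add: primitive_character_def)
  have iu: "inv u \<in> carrier R" and it: "inv t \<in> carrier R" using u t by auto
  have "\<chi> ((inv u \<ominus> inv t) \<otimes> b) = 1" if b: "b \<in> carrier R" for b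
  proof -
    have "(inv u \<ominus> inv t) \<otimes> b = inv u \<otimes> b \<oplus> \<ominus> (inv t \<otimes> b)" using iu it b by algebra
    then have "\<chi> ((inv u \<ominus> inv t) \<otimes> b) = \<chi> (\<ominus> (inv t \<otimes> b)) * \<chi> (inv t \<otimes> b)"
      using add_character_add[OF \<chi>'] iu it b eq[OF b] by simp
    then show ?thesis using add_character_neg[OF \<chi>'] it b by simp
  qed
  then have zero: "inv u \<ominus> inv t = \<zero>" using primitive_character_ideal_trivial[OF \<chi>] iu it by blast
  have "inv u = (inv u \<ominus> inv t) \<oplus> inv t" using iu it by algebra
  then have "inv u = inv t" unfolding zero using it by simp
  then show "u = t" by (metis Units_inv_inv[OF u] Units_inv_inv[OF t])
qed

lemma faithful_rep_translations:
  assumes \<rho>: "faithful_rep (Aff R) d \<rho>"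
  shows "finite_add_rep R (\<lambda>b. \<rho> (b, \<one>)) d"
    and "\<And>b. b \<in> carrier R \<Longrightarrow> \<rho> (b, \<one>) = 1\<^sub>m d \<Longrightarrow> b = \<zero>"
proof -
  note Aff_carrier [simp] Aff_mult [simp]
  show "finite_add_rep R (\<lambda>b. \<rho> (b, \<one>)) d"
  proof unfold_locales
    show "finite (carrier R)" by (rule finite_carrier)
    show "\<rho> (x, \<one>) \<in> carrier_mat d d" if "x \<in> carrier R" for x
      using faithful_rep_carrier[OF \<rho>] that by simp
    show "\<rho> (x \<oplus> y, \<one>) = \<rho> (x, \<one>) * \<rho> (y, \<one>)" if "x \<in> carrier R" "y \<in> carrier R" for x y
      using faithful_rep_mult[OF \<rho>, of "(x, \<one>)" "(y, \<one>)"] that by simp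
    show "\<rho> (\<zero>, \<one>) = 1\<^sub>m d" using faithful_rep_one[OF \<rho>] by (simp add: Aff_one)
  qed
  show "b = \<zero>" if "b \<in> carrier R" "\<rho> (b, \<one>) = 1\<^sub>m d" for b
    using inj_onD[OF faithful_rep_inj[OF \<rho>], of "(b, \<one>)" "(\<zero>, \<one>)"] that faithful_rep_one[OF \<rho>]
    by (simp add: Aff_one)
qed

lemma faithful_rep_conjugate_translation:
  assumes \<rho>: "faithful_rep (Aff R) d \<rho>" and b: "b \<in> carrier R" and u: "u \<in> Units R"
  shows "\<rho> (b, \<one>) * \<rho> (\<zero>, u) = \<rho> (\<zero>, u) * \<rho> (inv u \<otimes> b, \<one>)"
proof -
  note hom = faithful_rep_mult[OF \<rho>, unfolded Aff_carrier]
  have "\<rho> (b, \<one>) * \<rho> (\<zero>, u) = \<rho> (b, u)"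
    using hom[of "(b, \<one>)" "(\<zero>, u)"] b u by (simp add: Aff_mult Units_closed)
  also have "\<dots> = \<rho> (\<zero>, u) * \<rho> (inv u \<otimes> b, \<one>)"
    using hom[of "(\<zero>, u)" "(inv u \<otimes> b, \<one>)"] b u
    by (simp add: Aff_mult Units_closed m_assoc[symmetric] Units_r_inv)
  finally show ?thesis .
qed

lemma faithful_rep_card_units_le:
  assumes \<rho>: "faithful_rep (Aff R) d \<rho>"
  shows "card (Units R) \<le> d"
proof -
  define A where "A b = \<rho> (b, \<one>)" for b
  interpret A: finite_add_rep R A d
    unfolding A_def by (rule faithful_rep_translations(1)[OF \<rho>])
  obtain m0 where m0: "m0 \<in> M" "m0 \<noteq> \<zero>" using M_nontrivial by blast
  then have "A m0 \<noteq> 1\<^sub>m d" using faithful_rep_translations(2)[OF \<rho>] M_subset by (auto simp: A_def)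
  then obtain w \<chi> where w: "w \<in> carrier_vec d" "w \<noteq> 0\<^sub>v d" and \<chi>: "add_character R \<chi>"
    and eig: "\<And>b. b \<in> carrier R \<Longrightarrow> A b *\<^sub>v w = \<chi> b \<cdot>\<^sub>v w" and "(\<Sum>m\<in>M. \<chi> m) = 0"
    using A.common_eigenvector_character[OF M_subgroup m0(1)] by blast
  then have prim: "primitive_character \<chi>" by (simp add: primitive_character_def)
  define U where "U u = \<rho> (\<zero>, u)" for u
  have U: "U u \<in> carrier_mat d d" if "u \<in> Units R" for u
    using faithful_rep_carrier[OF \<rho>] that by (simp add: Aff_carrier U_def)
  have UU: "U (inv u) * U u = 1\<^sub>m d" if u: "u \<in> Units R" for u
    using faithful_rep_mult[OF \<rho>, of "(\<zero>, inv u)" "(\<zero>, u)"] faithful_rep_one[OF \<rho>] u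
    by (simp add: Aff_carrier Aff_mult Aff_one Units_closed Units_l_inv U_def)
  show ?thesis
  proof (rule A.eigenvectors_card_le)
    show "finite (Units R)" using finite_carrier by (rule finite_subset[rotated]) (auto simp: Units_def)
    fix u assume u: "u \<in> Units R"
    show "U u *\<^sub>v w \<in> carrier_vec d" using U[OF u] w(1) by simp
    have "U (inv u) *\<^sub>v (U u *\<^sub>v w) = w"
      using UU[OF u] U[OF u] U[OF Units_inv_Units[OF u]] w(1) by (simp flip: assoc_mult_mat_vec)
    then show "U u *\<^sub>v w \<noteq> 0\<^sub>v d" using w U[OF Units_inv_Units[OF u]] by auto
    fix b assume b: "b \<in> carrier R"
    have ib: "inv u \<otimes> b \<in> carrier R" using u b by simp
    have "A b *\<^sub>v (U u *\<^sub>v w) = U u *\<^sub>v (A (inv u \<otimes> b) *\<^sub>v w)"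
      using faithful_rep_conjugate_translation[OF \<rho> b u] A.A_carrier[OF b] A.A_carrier[OF ib] U[OF u] w(1)
      by (simp add: A_def U_def flip: assoc_mult_mat_vec)
    then show "A b *\<^sub>v (U u *\<^sub>v w) = \<chi> (inv u \<otimes> b) \<cdot>\<^sub>v (U u *\<^sub>v w)"
      using eig[OF ib] U[OF u] w(1) by (simp add: mult_mat_vec)
  next
    fix u t assume "u \<in> Units R" "t \<in> Units R" "u \<noteq> t"
    then show "\<exists>b\<in>carrier R. \<chi> (inv u \<otimes> b) \<noteq> \<chi> (inv t \<otimes> b)"
      using primitive_character_scalings_distinct[OF prim] by blast
  qed
qed

lemma finite_Units: "finite (Units R)"
  using finite_carrier by (rule finite_subset[rotated]) (auto simp: Units_def)

definition unit_enum :: "nat \<Rightarrow> 'a" where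
  "unit_enum = (SOME e. bij_betw e {..<card (Units R)} (Units R))"

lemma unit_enum_bij: "bij_betw unit_enum {..<card (Units R)} (Units R)"
proof -
  obtain e where "bij_betw e {..<card (Units R)} (Units R)"
    using ex_bij_betw_nat_finite[OF finite_Units] by (auto simp: atLeast0LessThan)
  then show ?thesis unfolding unit_enum_def by (rule someI[where P = "\<lambda>e. bij_betw e _ _"])
qed

lemma unit_enum_Units: "i < card (Units R) \<Longrightarrow> unit_enum i \<in> Units R"
  using unit_enum_bij by (auto simp: bij_betw_def)

lemma unit_enum_inj: "i < card (Units R) \<Longrightarrow> j < card (Units R) \<Longrightarrow> unit_enum i = unit_enum j \<longleftrightarrow> i = j"
  using unit_enum_bij by (auto simp: bij_betw_def inj_on_def)

definition unit_index :: "'a \<Rightarrow> nat" where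
  "unit_index = inv_into {..<card (Units R)} unit_enum"

lemma unit_index_less: "s \<in> Units R \<Longrightarrow> unit_index s < card (Units R)"
  and unit_enum_unit_index: "s \<in> Units R \<Longrightarrow> unit_enum (unit_index s) = s"
proof -
  assume "s \<in> Units R"
  then have s: "s \<in> unit_enum ` {..<card (Units R)}" using unit_enum_bij by (simp add: bij_betw_def)
  show "unit_index s < card (Units R)" using inv_into_into[OF s] by (simp add: unit_index_def)
  show "unit_enum (unit_index s) = s" using f_inv_into_f[OF s] by (simp add: unit_index_def)
qed

text \<open>The representation induced from a character \<open>\<chi>\<close> of the translations: it acts on
  functions on \<open>Units R\<close>, and \<open>(b, u)\<close> sends the point mass at \<open>s\<close> to \<open>\<chi>((u s)\<inverse> b)\<close> times
  the point mass at \<open>u s\<close>.\<close>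
definition induced_rep :: "('a \<Rightarrow> complex) \<Rightarrow> 'a \<times> 'a \<Rightarrow> complex mat" where
  "induced_rep \<chi> = (\<lambda>(b, u). mat (card (Units R)) (card (Units R)) (\<lambda>(i, j).
     if unit_enum i = u \<otimes> unit_enum j then \<chi> (inv (unit_enum i) \<otimes> b) else 0))"

lemma induced_rep_carrier: "induced_rep \<chi> p \<in> carrier_mat (card (Units R)) (card (Units R))"
  and dim_induced_rep [simp]: "dim_row (induced_rep \<chi> p) = card (Units R)"
    "dim_col (induced_rep \<chi> p) = card (Units R)"
  by (cases p; simp add: induced_rep_def)+

lemma index_induced_rep:
  "i < card (Units R) \<Longrightarrow> j < card (Units R) \<Longrightarrow> induced_rep \<chi> (b, u) $$ (i, j)
     = (if unit_enum i = u \<otimes> unit_enum j then \<chi> (inv (unit_enum i) \<otimes> b) else 0)"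
  by (simp add: induced_rep_def)

lemma induced_rep_one: "induced_rep \<chi> (\<zero>, \<one>) = 1\<^sub>m (card (Units R))" if "add_character R \<chi>"
  using that unit_enum_Units unit_enum_inj
  by (intro eq_matI) (auto simp: index_induced_rep add_character_zero Units_closed)

lemma induced_rep_mult:
  assumes \<chi>: "add_character R \<chi>" and b: "b \<in> carrier R" "b' \<in> carrier R"
    and u: "u \<in> Units R" "u' \<in> Units R"
  shows "induced_rep \<chi> (b \<oplus> u \<otimes> b', u \<otimes> u') = induced_rep \<chi> (b, u) * induced_rep \<chi> (b', u')"
proof (rule eq_matI)
  fix i j assume "i < dim_row (induced_rep \<chi> (b, u) * induced_rep \<chi> (b', u'))"
    "j < dim_col (induced_rep \<chi> (b, u) * induced_rep \<chi> (b', u'))"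
  then have ij: "i < card (Units R)" "j < card (Units R)" by simp_all
  define c where "c = u' \<otimes> unit_enum j"
  have c: "c \<in> Units R" using u(2) unit_enum_Units[OF ij(2)] by (simp add: c_def)
  have ei: "unit_enum i \<in> Units R" using unit_enum_Units[OF ij(1)] .
  have uc: "u \<otimes> c = u \<otimes> u' \<otimes> unit_enum j"
    using u unit_enum_Units[OF ij(2)] by (simp add: c_def m_assoc Units_closed)
  define f where "f l = (if unit_enum i = u \<otimes> unit_enum l then \<chi> (inv (unit_enum i) \<otimes> b) else 0)
      * \<chi> (inv (unit_enum l) \<otimes> b')" for l
  have "(induced_rep \<chi> (b, u) * induced_rep \<chi> (b', u')) $$ (i, j)
      = (\<Sum>l<card (Units R). induced_rep \<chi> (b, u) $$ (i, l) * induced_rep \<chi> (b', u') $$ (l, j))"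
    using ij by (intro index_mult_mat_sum[OF induced_rep_carrier induced_rep_carrier])
  also have "\<dots> = (\<Sum>l<card (Units R). if unit_enum l = c then f l else 0)"
    using ij by (intro sum.cong refl) (auto simp: index_induced_rep c_def f_def)
  also have "\<dots> = f (inv_into {..<card (Units R)} unit_enum c)"
    by (rule sum_if_bij_eq[OF unit_enum_bij c])
  also have "\<dots> = (if unit_enum i = u \<otimes> c then \<chi> (inv (unit_enum i) \<otimes> b) * \<chi> (inv c \<otimes> b') else 0)"
    using unit_enum_bij c by (simp add: f_def bij_betw_def f_inv_into_f)
  also have "\<dots> = induced_rep \<chi> (b \<oplus> u \<otimes> b', u \<otimes> u') $$ (i, j)"
  proof (cases "unit_enum i = u \<otimes> c")
    case True
    have "inv (unit_enum i) \<otimes> u = inv c" using True inv_mult_Units_cancel[OF u(1) c] by simp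
    then have "inv (unit_enum i) \<otimes> (b \<oplus> u \<otimes> b') = inv (unit_enum i) \<otimes> b \<oplus> inv c \<otimes> b'"
      using b u(1) ei by (simp add: r_distr m_assoc[symmetric] Units_closed)
    then show ?thesis
      using True uc ij b u ei c by (simp add: index_induced_rep add_character_add[OF \<chi>] Units_closed)
  next
    case False
    then show ?thesis using uc ij by (simp add: index_induced_rep)
  qed
  finally show "induced_rep \<chi> (b \<oplus> u \<otimes> b', u \<otimes> u') $$ (i, j)
      = (induced_rep \<chi> (b, u) * induced_rep \<chi> (b', u')) $$ (i, j)" by simp
qed simp_all

lemma index_induced_rep_Units:
  assumes s: "s \<in> Units R" and t: "t \<in> Units R"
  shows "induced_rep \<chi> (b, u) $$ (unit_index s, unit_index t) = (if s = u \<otimes> t then \<chi> (inv s \<otimes> b) else 0)"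
proof -
  have "induced_rep \<chi> (b, u) $$ (unit_index s, unit_index t)
      = (if unit_enum (unit_index s) = u \<otimes> unit_enum (unit_index t)
         then \<chi> (inv (unit_enum (unit_index s)) \<otimes> b) else 0)"
    by (rule index_induced_rep) (simp_all add: unit_index_less s t)
  then show ?thesis by (simp only: unit_enum_unit_index s t)
qed

lemma inj_on_induced_rep:
  assumes \<chi>: "primitive_character \<chi>"
  shows "inj_on (induced_rep \<chi>) (carrier R \<times> Units R)"
proof (rule inj_onI, clarify)
  fix b u b' u' assume b: "b \<in> carrier R" "b' \<in> carrier R" and u: "u \<in> Units R" "u' \<in> Units R"
    and eq: "induced_rep \<chi> (b, u) = induced_rep \<chi> (b', u')"
  have \<chi>': "add_character R \<chi>" using \<chi> by (simp add: primitive_character_def)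
  have entry: "(if s = u \<otimes> t then \<chi> (inv s \<otimes> b) else 0) = (if s = u' \<otimes> t then \<chi> (inv s \<otimes> b') else 0)"
    if "s \<in> Units R" "t \<in> Units R" for s t
    using index_induced_rep_Units[OF that, of \<chi>] eq by metis
  have "\<chi> (inv u \<otimes> b) \<noteq> 0" using add_character_nonzero[OF \<chi>'] u(1) b(1) by simp
  then have "u = u'" using entry[of u \<one>] u by (auto simp: Units_closed split: if_splits)
  have "\<chi> ((b \<ominus> b') \<otimes> s) = 1" if s: "s \<in> Units R" for s
  proof -
    have "inv s = u \<otimes> (inv u \<otimes> inv s)" using u(1) s by (simp add: m_assoc[symmetric] Units_closed)
    then have "\<chi> (s \<otimes> b) = \<chi> (s \<otimes> b')"
      using entry[of "inv s" "inv u \<otimes> inv s"] s u \<open>u = u'\<close> by simp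
    moreover have "(b \<ominus> b') \<otimes> s = s \<otimes> b \<oplus> \<ominus> (s \<otimes> b')"
      using Units_closed[OF s] b by algebra
    ultimately show ?thesis
      using add_character_add[OF \<chi>'] add_character_neg[OF \<chi>'] s b by (simp add: Units_closed mult.commute)
  qed
  then have "b \<ominus> b' = \<zero>" using primitive_character_units_trivial[OF \<chi>] b by simp
  moreover have "b = (b \<ominus> b') \<oplus> b'" using b by algebra
  ultimately show "b = b' \<and> u = u'" using \<open>u = u'\<close> b by (metis l_zero)
qed

lemma faithful_rep_induced_rep:
  assumes \<chi>: "primitive_character \<chi>"
  shows "faithful_rep (Aff R) (card (Units R)) (induced_rep \<chi>)"
  using \<chi> induced_rep_carrier induced_rep_mult induced_rep_one inj_on_induced_rep[OF \<chi>]
  unfolding faithful_rep_def primitive_character_def Aff_carrier Aff_one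
  by (auto simp: Aff_mult)

theorem m_faithful_Aff: "m_faithful (Aff R) = card (Units R)"
  unfolding m_faithful_def
proof (rule Least_equality)
  show "\<exists>\<rho>. faithful_rep (Aff R) (card (Units R)) \<rho>"
    using primitive_character_exists faithful_rep_induced_rep by blast
qed (use faithful_rep_card_units_le in blast)

end

section \<open>Quotients of the valuation ring\<close>

locale local_field =
  fixes v :: "'a::field \<Rightarrow> int"
  assumes nonarch_local_field: "nonarch_local_field v"
begin

lemma val_mult: "x \<noteq> 0 \<Longrightarrow> y \<noteq> 0 \<Longrightarrow> v (x * y) = v x + v y"
  and val_add: "x \<noteq> 0 \<Longrightarrow> y \<noteq> 0 \<Longrightarrow> x + y \<noteq> 0 \<Longrightarrow> min (v x) (v y) \<le> v (x + y)"
  and val_surj: "\<exists>x. x \<noteq> 0 \<and> v x = k"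
  and finite_residue_field: "finite (carrier (val_ring v Quot val_ideal v 1))"
  using nonarch_local_field unfolding nonarch_local_field_def by blast+

lemma val_one [simp]: "v 1 = 0"
  using val_mult[of 1 1] by simp

lemma val_inverse: "x \<noteq> 0 \<Longrightarrow> v (inverse x) = - v x"
  using val_mult[of x "inverse x"] by simp

lemma val_divide: "x \<noteq> 0 \<Longrightarrow> y \<noteq> 0 \<Longrightarrow> v (x / y) = v x - v y"
  by (simp add: divide_inverse val_mult val_inverse)

lemma mem_val_ideal: "x \<in> val_ideal v k \<longleftrightarrow> x = 0 \<or> int k \<le> v x"
  by (simp add: val_ideal_def)

lemma zero_mem_val_ideal [simp]: "0 \<in> val_ideal v k"
  by (simp add: mem_val_ideal)

lemma one_mem_val_ideal_0 [simp]: "1 \<in> val_ideal v 0"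
  by (simp add: mem_val_ideal)

lemma val_ideal_add: "x \<in> val_ideal v k \<Longrightarrow> y \<in> val_ideal v k \<Longrightarrow> x + y \<in> val_ideal v k"
  unfolding mem_val_ideal using val_add[of x y] by (cases "x = 0"; cases "y = 0"; cases "x + y = 0") auto

lemma val_ideal_uminus: "x \<in> val_ideal v k \<Longrightarrow> - x \<in> val_ideal v k"
proof (cases "x = 0")
  case False
  then show "x \<in> val_ideal v k \<Longrightarrow> - x \<in> val_ideal v k"
    using val_mult[of "-1" x] val_mult[of "-1" "-1"] by (simp add: mem_val_ideal)
qed simp

lemma val_ideal_diff: "x \<in> val_ideal v k \<Longrightarrow> y \<in> val_ideal v k \<Longrightarrow> x - y \<in> val_ideal v k"
  using val_ideal_add[of x k "-y"] val_ideal_uminus[of y k] by simp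

lemma val_ideal_mult: "x \<in> val_ideal v a \<Longrightarrow> y \<in> val_ideal v b \<Longrightarrow> x * y \<in> val_ideal v (a + b)"
  unfolding mem_val_ideal using val_mult[of x y] by (cases "x = 0"; cases "y = 0") auto

lemma val_ideal_antimono: "a \<le> b \<Longrightarrow> x \<in> val_ideal v b \<Longrightarrow> x \<in> val_ideal v a"
  unfolding mem_val_ideal by auto

lemma val_ideal_mult_left: "x \<in> val_ideal v 0 \<Longrightarrow> y \<in> val_ideal v b \<Longrightarrow> x * y \<in> val_ideal v b"
  using val_ideal_mult[of x 0 y b] by simp

lemma val_ideal_mult_right: "y \<in> val_ideal v b \<Longrightarrow> x \<in> val_ideal v 0 \<Longrightarrow> y * x \<in> val_ideal v b"
  using val_ideal_mult_left[of x y b] by (simp add: mult.commute)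

lemma carrier_val_ring: "carrier (val_ring v) = val_ideal v 0"
  by (auto simp: val_ring_def val_ideal_def)

lemma val_ring_simps [simp]: "(\<otimes>\<^bsub>val_ring v\<^esub>) = (*)" "(\<oplus>\<^bsub>val_ring v\<^esub>) = (+)"
  "\<one>\<^bsub>val_ring v\<^esub> = 1" "\<zero>\<^bsub>val_ring v\<^esub> = 0"
  by (auto simp: val_ring_def)

lemma cring_val_ring: "cring (val_ring v)"
proof (rule cringI)
  show "abelian_group (val_ring v)"
    by (rule abelian_groupI)
      (auto simp: carrier_val_ring val_ideal_add intro!: bexI[of _ "- _"] val_ideal_uminus)
  show "comm_monoid (val_ring v)"
    by (rule comm_monoidI) (auto simp: carrier_val_ring dest: val_ideal_mult_left)
qed (auto simp: distrib_right)

lemma a_inv_val_ring: "x \<in> val_ideal v 0 \<Longrightarrow> \<ominus>\<^bsub>val_ring v\<^esub> x = - x"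
proof -
  interpret cring "val_ring v" by (rule cring_val_ring)
  show "x \<in> val_ideal v 0 \<Longrightarrow> \<ominus>\<^bsub>val_ring v\<^esub> x = - x"
    by (rule minus_equality) (auto simp: carrier_val_ring val_ideal_uminus)
qed

lemma ideal_val_ideal: "ideal (val_ideal v k) (val_ring v)"
proof -
  interpret cring "val_ring v" by (rule cring_val_ring)
  have sub: "val_ideal v k \<subseteq> val_ideal v 0" using val_ideal_antimono[of 0 k] by auto
  show ?thesis
  proof (rule idealI)
    show "ring (val_ring v)" by unfold_locales
    show "subgroup (val_ideal v k) (add_monoid (val_ring v))"
    proof (rule add.subgroupI)
      show "val_ideal v k \<noteq> {}" using zero_mem_val_ideal[of k] by blast
    qed (use sub in \<open>auto simp: carrier_val_ring a_inv_val_ring val_ideal_uminus val_ideal_add\<close>)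
  qed (use sub in \<open>auto simp: carrier_val_ring intro: val_ideal_mult_left val_ideal_mult_right\<close>)
qed

abbreviation quot_ring :: "nat \<Rightarrow> 'a set ring" where
  "quot_ring k \<equiv> val_ring v Quot val_ideal v k"

definition res :: "nat \<Rightarrow> 'a \<Rightarrow> 'a set" where
  "res k x = val_ideal v k +>\<^bsub>val_ring v\<^esub> x"

lemma res_eq_image: "res k x = (\<lambda>h. h + x) ` val_ideal v k"
  unfolding res_def a_r_coset_def' by auto

lemma res_eq_iff: "res k x = res k y \<longleftrightarrow> x - y \<in> val_ideal v k"
proof
  assume "res k x = res k y"
  then have "x \<in> res k y" using image_eqI[of x "\<lambda>h. h + x" 0] by (auto simp: res_eq_image)
  then show "x - y \<in> val_ideal v k" unfolding res_eq_image by auto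
next
  assume xy: "x - y \<in> val_ideal v k"
  have "(\<lambda>h. h + x) ` val_ideal v k \<subseteq> (\<lambda>h. h + y) ` val_ideal v k" if "x - y \<in> val_ideal v k" for x y
  proof
    fix z assume "z \<in> (\<lambda>h. h + x) ` val_ideal v k"
    then obtain h where "h \<in> val_ideal v k" "z = h + x" by auto
    then show "z \<in> (\<lambda>h. h + y) ` val_ideal v k"
      using val_ideal_add[OF _ that] by (intro image_eqI[of _ _ "h + (x - y)"]) auto
  qed
  then show "res k x = res k y"
    using xy val_ideal_uminus[OF xy] unfolding res_eq_image by (simp add: subset_antisym)
qed

lemma carrier_quot_ring: "carrier (quot_ring k) = res k ` val_ideal v 0"
  unfolding FactRing_def A_RCOSETS_def' res_def by (auto simp: carrier_val_ring)

lemma quot_ring_add: "x \<in> val_ideal v 0 \<Longrightarrow> y \<in> val_ideal v 0 \<Longrightarrow> res k x \<oplus>\<^bsub>quot_ring k\<^esub> res k y = res k (x + y)"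
  and quot_ring_mult: "x \<in> val_ideal v 0 \<Longrightarrow> y \<in> val_ideal v 0 \<Longrightarrow> res k x \<otimes>\<^bsub>quot_ring k\<^esub> res k y = res k (x * y)"
  using ring_hom_add[OF ideal.rcos_ring_hom[OF ideal_val_ideal], of x y]
    ring_hom_mult[OF ideal.rcos_ring_hom[OF ideal_val_ideal], of x y]
  by (simp_all add: res_def carrier_val_ring)

lemma quot_ring_one: "\<one>\<^bsub>quot_ring k\<^esub> = res k 1"
  by (simp add: res_def FactRing_def)

lemma quot_ring_zero: "\<zero>\<^bsub>quot_ring k\<^esub> = res k 0"
  by (simp add: res_eq_image FactRing_def)

lemma cring_quot_ring: "cring (quot_ring k)"
  by (rule ideal.quotient_is_cring[OF ideal_val_ideal cring_val_ring])

lemma a_inv_quot_ring: "x \<in> val_ideal v 0 \<Longrightarrow> \<ominus>\<^bsub>quot_ring k\<^esub> res k x = res k (- x)"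
proof -
  interpret cring "quot_ring k" by (rule cring_quot_ring)
  show "x \<in> val_ideal v 0 \<Longrightarrow> \<ominus>\<^bsub>quot_ring k\<^esub> res k x = res k (- x)"
    by (rule minus_equality)
      (auto simp: carrier_quot_ring quot_ring_add quot_ring_zero val_ideal_uminus)
qed

definition uniformizer :: 'a where
  "uniformizer = (SOME x. x \<noteq> 0 \<and> v x = 1)"

lemma uniformizer_nonzero: "uniformizer \<noteq> 0"
  and uniformizer_pow_nonzero: "uniformizer ^ k \<noteq> 0"
  and val_uniformizer_pow: "v (uniformizer ^ k) = int k"
proof -
  have \<pi>: "uniformizer \<noteq> 0" "v uniformizer = 1"
    using someI_ex[OF val_surj[of 1]] unfolding uniformizer_def by auto
  show "uniformizer \<noteq> 0" "uniformizer ^ k \<noteq> 0" using \<pi> by simp_all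
  show "v (uniformizer ^ k) = int k" by (induction k) (auto simp: val_mult \<pi>)
qed

lemma uniformizer_pow_mem_val_ideal: "uniformizer ^ k \<in> val_ideal v k"
  by (simp add: mem_val_ideal val_uniformizer_pow)

lemma mult_uniformizer_pow_mem_iff:
  "uniformizer ^ k * y \<in> val_ideal v (k + j) \<longleftrightarrow> y \<in> val_ideal v j"
  unfolding mem_val_ideal using uniformizer_pow_nonzero[of k] val_uniformizer_pow[of k]
  by (cases "y = 0") (auto simp: val_mult)

lemma divide_uniformizer_pow_mem: "x \<in> val_ideal v (k + j) \<Longrightarrow> x / uniformizer ^ k \<in> val_ideal v j"
  using mult_uniformizer_pow_mem_iff[of k "x / uniformizer ^ k" j] uniformizer_nonzero by simp

definition res_rep :: "nat \<Rightarrow> 'a set \<Rightarrow> 'a" where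
  "res_rep k C = (SOME x. x \<in> val_ideal v 0 \<and> res k x = C)"

lemma res_rep: "C \<in> carrier (quot_ring k) \<Longrightarrow> res_rep k C \<in> val_ideal v 0 \<and> res k (res_rep k C) = C"
  unfolding res_rep_def carrier_quot_ring by (rule someI_ex) auto

lemma res_rep_res: "x \<in> val_ideal v 0 \<Longrightarrow> x - res_rep k (res k x) \<in> val_ideal v k"
  using res_rep[of "res k x" k] res_eq_iff[of k x] by (auto simp: carrier_quot_ring)

text \<open>One more \<open>\<pi>\<close>-adic digit: \<open>x + \<pi>\<^sup>k y\<close> modulo \<open>p\<^sup>k\<^sup>+\<^sup>1\<close> is determined by \<open>x\<close> modulo
  \<open>p\<^sup>k\<close> and \<open>y\<close> modulo \<open>p\<close>, and every class arises this way.\<close>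
definition digit_expansion :: "nat \<Rightarrow> 'a set \<times> 'a set \<Rightarrow> 'a set" where
  "digit_expansion k = (\<lambda>(C, D). res (Suc k) (res_rep k C + uniformizer ^ k * res_rep 1 D))"

lemma inj_on_digit_expansion:
  "inj_on (digit_expansion k) (carrier (quot_ring k) \<times> carrier (quot_ring 1))"
proof (rule inj_onI, clarify)
  fix C D C' D'
  assume CD: "C \<in> carrier (quot_ring k)" "D \<in> carrier (quot_ring 1)"
    "C' \<in> carrier (quot_ring k)" "D' \<in> carrier (quot_ring 1)"
    and eq: "digit_expansion k (C, D) = digit_expansion k (C', D')"
  define x y x' y' where "x = res_rep k C" "y = res_rep 1 D" "x' = res_rep k C'" "y' = res_rep 1 D'"
  have r: "x \<in> val_ideal v 0" "res k x = C" "y \<in> val_ideal v 0" "res 1 y = D"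
     "x' \<in> val_ideal v 0" "res k x' = C'" "y' \<in> val_ideal v 0" "res 1 y' = D'"
    using CD res_rep unfolding x_y_x'_y'_def by auto
  have e: "(x - x') + uniformizer ^ k * (y - y') \<in> val_ideal v (Suc k)"
    using eq by (simp add: digit_expansion_def x_y_x'_y'_def res_eq_iff algebra_simps)
  have "uniformizer ^ k * (y - y') \<in> val_ideal v (k + 0)"
    using mult_uniformizer_pow_mem_iff val_ideal_diff[OF r(3) r(7)] by blast
  then have "((x - x') + uniformizer ^ k * (y - y')) - uniformizer ^ k * (y - y') \<in> val_ideal v k"
    using val_ideal_diff[OF val_ideal_antimono[OF _ e]] by (metis add_0_right le_SucI order_refl)
  then have "x - x' \<in> val_ideal v k" by simp
  then have "x = x'" using r res_eq_iff x_y_x'_y'_def by metis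
  then have "uniformizer ^ k * (y - y') \<in> val_ideal v (k + 1)" using e by simp
  then have "y = y'" using r res_eq_iff x_y_x'_y'_def mult_uniformizer_pow_mem_iff by metis
  show "C = C' \<and> D = D'" using \<open>x = x'\<close> \<open>y = y'\<close> r by metis
qed

lemma digit_expansion_image:
  "digit_expansion k ` (carrier (quot_ring k) \<times> carrier (quot_ring 1)) = carrier (quot_ring (Suc k))"
proof (intro equalityI subsetI)
  fix E assume "E \<in> digit_expansion k ` (carrier (quot_ring k) \<times> carrier (quot_ring 1))"
  then obtain C D where "C \<in> carrier (quot_ring k)" "D \<in> carrier (quot_ring 1)"
    "E = res (Suc k) (res_rep k C + uniformizer ^ k * res_rep 1 D)"
    by (auto simp: digit_expansion_def)
  moreover have "uniformizer ^ k \<in> val_ideal v 0" by (simp add: mem_val_ideal val_uniformizer_pow)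
  ultimately show "E \<in> carrier (quot_ring (Suc k))"
    using res_rep by (auto simp: carrier_quot_ring intro!: val_ideal_add val_ideal_mult_left)
next
  fix E assume "E \<in> carrier (quot_ring (Suc k))"
  then obtain z where z: "z \<in> val_ideal v 0" "E = res (Suc k) z" by (auto simp: carrier_quot_ring)
  define C where "C = res k z"
  define x where "x = res_rep k C"
  have x: "x \<in> val_ideal v 0" "z - x \<in> val_ideal v k"
    using res_rep[of C k] res_rep_res[OF z(1), of k] z(1) by (auto simp: C_def x_def carrier_quot_ring)
  define t where "t = (z - x) / uniformizer ^ k"
  have t: "t \<in> val_ideal v 0" using divide_uniformizer_pow_mem[of "z - x" k 0] x by (simp add: t_def)
  define D where "D = res 1 t"
  have "z - (x + uniformizer ^ k * res_rep 1 D) = uniformizer ^ k * (t - res_rep 1 D)"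
    using uniformizer_pow_nonzero[of k] by (simp add: t_def field_simps)
  also have "\<dots> \<in> val_ideal v (k + 1)"
    using mult_uniformizer_pow_mem_iff[of k _ 1] res_rep_res[OF t, of 1] by (simp add: D_def)
  finally have "E = digit_expansion k (C, D)"
    using z by (simp add: digit_expansion_def res_eq_iff x_def)
  moreover have "(C, D) \<in> carrier (quot_ring k) \<times> carrier (quot_ring 1)"
    using z t by (auto simp: C_def D_def carrier_quot_ring)
  ultimately show "E \<in> digit_expansion k ` (carrier (quot_ring k) \<times> carrier (quot_ring 1))" by blast
qed

lemma carrier_quot_ring_0: "carrier (quot_ring 0) = {val_ideal v 0}"
proof -
  have "res 0 x = val_ideal v 0" if "x \<in> val_ideal v 0" for x
    using that res_eq_iff[of 0 x 0] by (simp add: res_eq_image)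
  then have "res 0 ` val_ideal v 0 = (\<lambda>_. val_ideal v 0) ` val_ideal v 0" by (rule image_cong[OF refl])
  moreover have "val_ideal v 0 \<noteq> {}" using zero_mem_val_ideal[of 0] by blast
  ultimately show ?thesis by (simp add: carrier_quot_ring image_constant_conv)
qed

lemma card_carrier_quot_ring:
  "finite (carrier (quot_ring k)) \<and> card (carrier (quot_ring k)) = residue_card v ^ k"
proof (induction k)
  case 0
  then show ?case by (simp add: carrier_quot_ring_0)
next
  case (Suc k)
  have bij: "bij_betw (digit_expansion k) (carrier (quot_ring k) \<times> carrier (quot_ring 1))
      (carrier (quot_ring (Suc k)))"
    using inj_on_digit_expansion digit_expansion_image by (simp add: bij_betw_def)
  have "finite (carrier (quot_ring k) \<times> carrier (quot_ring 1))"
    using Suc finite_residue_field by simp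
  then show ?case
    using bij_betw_finite[OF bij] bij_betw_same_card[OF bij] Suc
    by (simp add: card_cartesian_product residue_card_def mult.commute)
qed

lemma card_maximal_ideal_quot_ring: "card (res (Suc k) ` val_ideal v 1) = residue_card v ^ k"
proof -
  have "bij_betw (\<lambda>C. res (Suc k) (uniformizer * res_rep k C)) (carrier (quot_ring k))
      (res (Suc k) ` val_ideal v 1)"
  proof (rule bij_betw_imageI)
    show "inj_on (\<lambda>C. res (Suc k) (uniformizer * res_rep k C)) (carrier (quot_ring k))"
    proof (rule inj_onI)
      fix C C' assume C: "C \<in> carrier (quot_ring k)" "C' \<in> carrier (quot_ring k)"
        and "res (Suc k) (uniformizer * res_rep k C) = res (Suc k) (uniformizer * res_rep k C')"
      then have "uniformizer ^ 1 * (res_rep k C - res_rep k C') \<in> val_ideal v (1 + k)"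
        by (simp add: res_eq_iff algebra_simps)
      then show "C = C'" using res_rep[OF C(1)] res_rep[OF C(2)] res_eq_iff mult_uniformizer_pow_mem_iff
        by metis
    qed
    show "(\<lambda>C. res (Suc k) (uniformizer * res_rep k C)) ` carrier (quot_ring k) = res (Suc k) ` val_ideal v 1"
    proof (intro equalityI subsetI)
      fix E assume "E \<in> (\<lambda>C. res (Suc k) (uniformizer * res_rep k C)) ` carrier (quot_ring k)"
      then obtain C where "C \<in> carrier (quot_ring k)" "E = res (Suc k) (uniformizer ^ 1 * res_rep k C)"
        by auto
      then show "E \<in> res (Suc k) ` val_ideal v 1"
        using res_rep mult_uniformizer_pow_mem_iff[of 1 _ 0] by auto
    next
      fix E assume "E \<in> res (Suc k) ` val_ideal v 1"
      then obtain z where z: "z \<in> val_ideal v 1" "E = res (Suc k) z" by auto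
      define t where "t = z / uniformizer ^ 1"
      have t: "t \<in> val_ideal v 0" using divide_uniformizer_pow_mem[of z 1 0] z by (simp add: t_def)
      have "z - uniformizer * res_rep k (res k t) = uniformizer ^ 1 * (t - res_rep k (res k t))"
        using uniformizer_nonzero by (simp add: t_def algebra_simps)
      also have "\<dots> \<in> val_ideal v (1 + k)"
        using mult_uniformizer_pow_mem_iff res_rep_res[OF t] by blast
      finally have "E = res (Suc k) (uniformizer * res_rep k (res k t))" using z res_eq_iff by simp
      then show "E \<in> (\<lambda>C. res (Suc k) (uniformizer * res_rep k C)) ` carrier (quot_ring k)"
        using t by (auto simp: carrier_quot_ring)
    qed
  qed
  then show ?thesis using bij_betw_same_card card_carrier_quot_ring by metis
qed

lemma res_mem_Units_iff:
  assumes n: "n \<ge> 1" and x: "x \<in> val_ideal v 0"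
  shows "res n x \<in> Units (quot_ring n) \<longleftrightarrow> x \<notin> val_ideal v 1"
proof
  assume "res n x \<in> Units (quot_ring n)"
  then obtain c where c: "c \<in> carrier (quot_ring n)" "c \<otimes>\<^bsub>quot_ring n\<^esub> res n x = \<one>\<^bsub>quot_ring n\<^esub>"
    unfolding Units_def by auto
  obtain y where y: "y \<in> val_ideal v 0" "c = res n y" using c(1) by (auto simp: carrier_quot_ring)
  have "y * x - 1 \<in> val_ideal v n" using c(2) y x by (simp add: quot_ring_mult quot_ring_one res_eq_iff)
  then have yx: "y * x - 1 \<in> val_ideal v 1" using val_ideal_antimono n by blast
  show "x \<notin> val_ideal v 1"
  proof
    assume "x \<in> val_ideal v 1"
    then have "y * x - (y * x - 1) \<in> val_ideal v 1" using val_ideal_diff yx val_ideal_mult_left[OF y(1)] by blast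
    then show False by (simp add: mem_val_ideal)
  qed
next
  assume "x \<notin> val_ideal v 1"
  then have x0: "x \<noteq> 0" "v x = 0" using x by (auto simp: mem_val_ideal)
  have y: "inverse x \<in> val_ideal v 0" using val_inverse[OF x0(1)] x0 by (simp add: mem_val_ideal)
  have "res n (inverse x) \<otimes>\<^bsub>quot_ring n\<^esub> res n x = \<one>\<^bsub>quot_ring n\<^esub>"
       "res n x \<otimes>\<^bsub>quot_ring n\<^esub> res n (inverse x) = \<one>\<^bsub>quot_ring n\<^esub>"
    using x y x0 by (simp_all add: quot_ring_mult quot_ring_one)
  then show "res n x \<in> Units (quot_ring n)"
    unfolding Units_def using x y by (auto simp: carrier_quot_ring)
qed

lemma Units_quot_ring:
  assumes n: "n \<ge> 1"
  shows "Units (quot_ring n) = carrier (quot_ring n) - res n ` val_ideal v 1"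
proof -
  have "res n x \<in> res n ` val_ideal v 1 \<longleftrightarrow> x \<in> val_ideal v 1" if x: "x \<in> val_ideal v 0" for x
  proof
    assume "res n x \<in> res n ` val_ideal v 1"
    then obtain z where z: "z \<in> val_ideal v 1" "res n x = res n z" by auto
    then have "x - z \<in> val_ideal v 1" using val_ideal_antimono[OF n] by (simp add: res_eq_iff)
    then have "(x - z) + z \<in> val_ideal v 1" using val_ideal_add z(1) by blast
    then show "x \<in> val_ideal v 1" by simp
  qed simp
  then have "c \<in> Units (quot_ring n) \<longleftrightarrow> c \<notin> res n ` val_ideal v 1" if "c \<in> carrier (quot_ring n)" for c
    using that res_mem_Units_iff[OF n] by (auto simp: carrier_quot_ring)
  moreover have "Units (quot_ring n) \<subseteq> carrier (quot_ring n)" by (auto simp: Units_def)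
  ultimately show ?thesis by blast
qed

lemma card_Units_quot_ring:
  assumes n: "n \<ge> 1"
  shows "card (Units (quot_ring n)) = residue_card v ^ n - residue_card v ^ (n - 1)"
proof -
  have sub: "res n ` val_ideal v 1 \<subseteq> carrier (quot_ring n)"
    using val_ideal_antimono[of 0 1] by (auto simp: carrier_quot_ring)
  have "card (res n ` val_ideal v 1) = residue_card v ^ (n - 1)"
    using card_maximal_ideal_quot_ring[of "n - 1"] n by simp
  then show ?thesis
    using Units_quot_ring[OF n] card_Diff_subset[OF finite_subset[OF sub] sub] card_carrier_quot_ring[of n]
    by simp
qed

lemma quot_ring_socle_principal:
  assumes n: "n \<ge> 1" and a: "a \<in> carrier (quot_ring n)" "a \<noteq> \<zero>\<^bsub>quot_ring n\<^esub>"
    and m: "m \<in> res n ` val_ideal v (n - 1)"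
  shows "\<exists>b\<in>carrier (quot_ring n). m = a \<otimes>\<^bsub>quot_ring n\<^esub> b"
proof -
  obtain \<alpha> where \<alpha>: "\<alpha> \<in> val_ideal v 0" "a = res n \<alpha>" using a(1) by (auto simp: carrier_quot_ring)
  obtain \<mu> where \<mu>: "\<mu> \<in> val_ideal v (n - 1)" "m = res n \<mu>" using m by auto
  have "\<alpha> \<notin> val_ideal v n" using a(2) \<alpha> by (auto simp: quot_ring_zero res_eq_iff)
  then have \<alpha>0: "\<alpha> \<noteq> 0" "v \<alpha> < int n" "0 \<le> v \<alpha>" using \<alpha>(1) by (auto simp: mem_val_ideal)
  show ?thesis
  proof (cases "\<mu> = 0")
    case True
    then show ?thesis using \<alpha> \<mu>
      by (intro bexI[of _ "res n 0"]) (auto simp: carrier_quot_ring quot_ring_mult)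
  next
    case False
    define \<beta> where "\<beta> = \<mu> / \<alpha>"
    have "int (n - 1) \<le> v \<mu>" using \<mu>(1) False by (simp add: mem_val_ideal)
    moreover have "v \<beta> = v \<mu> - v \<alpha>" unfolding \<beta>_def using False \<alpha>0 by (simp add: val_divide)
    ultimately have \<beta>: "\<beta> \<in> val_ideal v 0" using \<alpha>0 n by (simp add: mem_val_ideal)
    have "a \<otimes>\<^bsub>quot_ring n\<^esub> res n \<beta> = m" using \<alpha> \<mu> \<beta> \<alpha>0 by (simp add: quot_ring_mult \<beta>_def)
    then show ?thesis using \<beta> by (intro bexI[of _ "res n \<beta>"]) (auto simp: carrier_quot_ring)
  qed
qed

lemma quot_ring_nonunit_minus_one:
  assumes n: "n \<ge> 1" and r: "r \<in> carrier (quot_ring n)" "r \<notin> Units (quot_ring n)"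
  shows "r \<ominus>\<^bsub>quot_ring n\<^esub> \<one>\<^bsub>quot_ring n\<^esub> \<in> Units (quot_ring n)"
proof -
  obtain \<rho> where \<rho>: "\<rho> \<in> val_ideal v 0" "r = res n \<rho>" using r(1) by (auto simp: carrier_quot_ring)
  have \<rho>1: "\<rho> \<in> val_ideal v 1" using res_mem_Units_iff[OF n \<rho>(1)] r \<rho> by simp
  have "r \<ominus>\<^bsub>quot_ring n\<^esub> \<one>\<^bsub>quot_ring n\<^esub> = res n (\<rho> - 1)"
    using \<rho> val_ideal_uminus[OF one_mem_val_ideal_0]
    by (simp add: a_minus_def quot_ring_one a_inv_quot_ring quot_ring_add)
  moreover have "\<rho> - 1 \<notin> val_ideal v 1"
  proof
    assume "\<rho> - 1 \<in> val_ideal v 1"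
    then have "\<rho> - (\<rho> - 1) \<in> val_ideal v 1" using val_ideal_diff[OF \<rho>1] by blast
    then show False by (simp add: mem_val_ideal)
  qed
  ultimately show ?thesis using res_mem_Units_iff[OF n val_ideal_diff[OF \<rho>(1) one_mem_val_ideal_0]] by simp
qed

lemma finite_local_ring_with_socle_quot_ring:
  assumes n: "n \<ge> 1"
  shows "finite_local_ring_with_socle (quot_ring n) (res n ` val_ideal v (n - 1))"
proof -
  interpret cring "quot_ring n" by (rule cring_quot_ring)
  have sub: "res n ` val_ideal v (n - 1) \<subseteq> carrier (quot_ring n)"
    using val_ideal_antimono[of 0 "n - 1"] by (auto simp: carrier_quot_ring)
  have finite: "finite (carrier (quot_ring n))" using card_carrier_quot_ring by blast
  have subgroup: "additive_subgroup (res n ` val_ideal v (n - 1)) (quot_ring n)"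
    unfolding additive_subgroup_def
  proof (rule add.subgroupI[OF sub])
    show "res n ` val_ideal v (n - 1) \<noteq> {}" using zero_mem_val_ideal by blast
  next
    fix a assume "a \<in> res n ` val_ideal v (n - 1)"
    then obtain x where x: "x \<in> val_ideal v (n - 1)" "a = res n x" by blast
    then show "\<ominus>\<^bsub>quot_ring n\<^esub> a \<in> res n ` val_ideal v (n - 1)"
      using val_ideal_antimono[of 0 "n - 1" x] val_ideal_uminus[OF x(1)] by (simp add: a_inv_quot_ring)
  next
    fix a b assume "a \<in> res n ` val_ideal v (n - 1)" "b \<in> res n ` val_ideal v (n - 1)"
    then obtain x y where xy: "x \<in> val_ideal v (n - 1)" "y \<in> val_ideal v (n - 1)"
      "a = res n x" "b = res n y" by blast
    then show "a \<oplus>\<^bsub>quot_ring n\<^esub> b \<in> res n ` val_ideal v (n - 1)"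
      using val_ideal_antimono[of 0 "n - 1"] val_ideal_add[OF xy(1,2)] by (simp add: quot_ring_add)
  qed
  have "uniformizer ^ (n - 1) \<notin> val_ideal v n"
    using uniformizer_nonzero val_uniformizer_pow[of "n - 1"] n by (simp add: mem_val_ideal)
  then have nontrivial: "\<exists>m\<in>res n ` val_ideal v (n - 1). m \<noteq> \<zero>\<^bsub>quot_ring n\<^esub>"
    using uniformizer_pow_mem_val_ideal by (auto simp: quot_ring_zero res_eq_iff)
  show ?thesis
    by (intro finite_local_ring_with_socle.intro finite_local_ring_with_socle_axioms.intro
        cring_quot_ring finite subgroup nontrivial quot_ring_nonunit_minus_one[OF n]
        quot_ring_socle_principal[OF n])
qed

end

theorem theorem1p5:
  fixes v :: "'a::field \<Rightarrow> int" and n :: nat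
  assumes "nonarch_local_field v" and "n \<ge> 1"
  shows "m_faithful (Aff (val_ring v Quot val_ideal v n))
           = residue_card v ^ n - residue_card v ^ (n - 1)"
proof -
  interpret local_field v by (rule local_field.intro) (rule assms(1))
  interpret finite_local_ring_with_socle "val_ring v Quot val_ideal v n" "res n ` val_ideal v (n - 1)"
    by (rule finite_local_ring_with_socle_quot_ring[OF assms(2)])
  show ?thesis using m_faithful_Aff card_Units_quot_ring[OF assms(2)] by simp
qed

end
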